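(* Let $q\ge 0$. (a) For $\mu,\mu'\in(\mathbb R\setminus\{0\})^q$, the Lie algebras $\mathfrak{osc}_{1,q}(1,\mu)$ and $\mathfrak{osc}_{1,q}(1,\mu')$ are isomorphic as Lie algebras if and only if they are isomorphic as metric Lie algebras. (b) For $\mu,\mu'\in((\mathbb R^2)^*\setminus\{0\})^q$, the Lie algebras $\mathfrak{osc}^2_{q}(\mu)$ and $\mathfrak{osc}^2_{q}(\mu')$ are isomorphic as Lie algebras if and only if they are isomorphic as metric Lie algebras. (c) For $\mu,\mu'\in((\mathbb R^2)^*\setminus\{0\})^q$, the Lie algebras $\mathfrak d_q(\mu)$ and $\mathfrak d_q(\mu')$ are isomorphic as Lie algebras if and only if $\mu(\mathbb R^2)=\mu'(\mathbb R^2)$ modulo the action of $S_q\ltimes(\mathbb Z_2)^q$.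
   Context: A metric Lie algebra is a real Lie algebra with a non-degenerate (not necessarily definite) ad-invariant symmetric bilinear form; an isomorphism of metric Lie algebras is a Lie algebra isomorphism that is also an isometry. Definition of $\mathfrak{osc}_{1,q}(1,\mu)$: for $\mu=(\mu_1,\dots,\mu_q)\in(\mathbb R\setminus\{0\})^q$, let $\mathfrak a=\mathbb C^{1+q}$, viewed as a real vector space of dimension $2q+2$, with inner product $\langle z,w\rangle_{\mathfrak a}=\mathrm{Re}z_0\,\mathrm{Re}w_0-\mathrm{Im}z_0\,\mathrm{Im}w_0+\sum_{j=1}^q\mathrm{Re}(z_j\bar w_j)$. Define $L(z_0,\dots,z_q)=i(\bar z_0,\mu_1z_1,\dots,\mu_qz_q)$. Then $\mathfrak{osc}_{1,q}(1,\mu)=\mathbb R\oplus\mathfrak a\oplus\mathbb R$, with elements $(z,a,t)$. The first summand is central, and the remaining brackets are $[t,a]=tL(a)\in\mathfrak a$, $[a,a']=\langle La,a'\rangle_{\mathfrak a}\in\mathbb R$ (first summand), and $[t,t']=0$. The invariant metric is $\langle(z,a,t),(z',a',t')\rangle=zt'+z't+\langle a,a'\rangle_{\mathfrak a}$. Definition of $\mathfrak{osc}^2_q(\mu)$: for $\mu=(\mu_1,\dots,\mu_q)$ with $\mu_j\in(\mathbb R^2)^*$, set $\mathfrak l=\mathbb R^2$, $\mathfrak z=\mathfrak l^*$, and $\mathfrak a^{2q}=\mathbb C^q$ with the Euclidean inner product $\langle z,w\rangle=\mathrm{Re}\sum_j z_j\bar w_j$. Let $\rho(t)(z_1,\dots,z_q)=i(\mu_1(t)z_1,\dots,\mu_q(t)z_q)$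 for $t\in\mathfrak l$, and define $\omega(a,a')\in\mathfrak z$ by $\omega(a,a')(t)=\langle\rho(t)a,a'\rangle$. Then $\mathfrak{osc}^2_q(\mu)=\mathfrak z\oplus\mathfrak a^{2q}\oplus\mathfrak l$, with $\mathfrak z$ central and the remaining brackets $[\mathfrak l,\mathfrak l]=0$, $[t,a]=\rho(t)a$, $[a,a']=\omega(a,a')$. The metric is $\langle(z,a,t),(z',a',t')\rangle=z(t')+z'(t)+\langle a,a'\rangle$. Definition of $\mathfrak d_q(\mu)$: with $\mathfrak l,\mathfrak z,\mathfrak a^{2q},\rho,\omega$ as in the previous paragraph, let $\mathfrak a_0=\mathbb R$ and $\alpha(t,t')=t_1t_2'-t_2t_1'$ for $t,t'\in\mathbb R^2$, so that $\alpha(e_1,e_2)=1$. For $t\in\mathfrak l$, define $t^\flat\in\mathfrak z$ by $t^\flat(t')=\alpha(t,t')$. Then $\mathfrak d_q(\mu)=\mathfrak z\oplus\mathfrak a^{2q}\oplus\mathfrak a_0\oplus\mathfrak l$ with the following brackets: $\mathfrak z$ is central; $[a,a']=\omega(a,a')$ for $a,a'\in\mathfrak a^{2q}$; $\mathfrak a_0$ commutes with $\mathfrak a^{2q}\oplus\mathfrak a_0$; $[t,z+a+s]=-s\,t^\flat+\rho(t)a$ for $z\in\mathfrak z$, $a\in\mathfrak a^{2q}$, $s\in\mathfrak a_0$; and $[t,t']=\alpha(t,t')\in\mathfrak a_0$. The metric is $\langle(z,a,s,t),(z',a',s',t')\rangle=z(t')+z'(t)+\langle a,a'\rangle+ss'$.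 Notation: for $\mu\in((\mathbb R^2)^* )^q$, write $\mu(e_i)=(\mu_1(e_i),\dots,\mu_q(e_i))\in\mathbb R^q$, where $e_1,e_2$ is the standard basis of $\mathbb R^2$, and set $\mu(\mathbb R^2)=\mathrm{span}\{\mu(e_1),\mu(e_2)\}\subset\mathbb R^q$. The group $S_q$ acts on $\mathbb R^q$ by permuting coordinates, and $(\mathbb Z_2)^q=\{\pm1\}^q$ acts by coordinatewise multiplication. These actions induce an action of $S_q\ltimes(\mathbb Z_2)^q$ on linear subspaces of $\mathbb R^q$. *)

theory Defs
  imports "HOL-Analysis.Analysis" "HOL-Combinatorics.Permutations"
begin

record 'v mla =
  car    :: "'v set"
  vadd   :: "'v \<Rightarrow> 'v \<Rightarrow> 'v"
  vscale :: "real \<Rightarrow> 'v \<Rightarrow> 'v"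
  brk    :: "'v \<Rightarrow> 'v \<Rightarrow> 'v"
  frm    :: "'v \<Rightarrow> 'v \<Rightarrow> real"

definition lie_iso :: "('a, 'c) mla_scheme \<Rightarrow> ('b, 'd) mla_scheme \<Rightarrow> ('a \<Rightarrow> 'b) \<Rightarrow> bool" where
  "lie_iso A B f \<longleftrightarrow>
     bij_betw f (car A) (car B) \<and>
     (\<forall>x\<in>car A. \<forall>y\<in>car A. f (vadd A x y) = vadd B (f x) (f y)) \<and>
     (\<forall>c. \<forall>x\<in>car A. f (vscale A c x) = vscale B c (f x)) \<and>
     (\<forall>x\<in>car A. \<forall>y\<in>car A. f (brk A x y) = brk B (f x) (f y))"

definition metric_lie_iso :: "('a, 'c) mla_scheme \<Rightarrow> ('b, 'd) mla_scheme \<Rightarrow> ('a \<Rightarrow> 'b) \<Rightarrow> bool" where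
  "metric_lie_iso A B f \<longleftrightarrow> lie_iso A B f \<and>
     (\<forall>x\<in>car A. \<forall>y\<in>car A. frm B (f x) (f y) = frm A x y)"

definition lie_isomorphic :: "('a, 'c) mla_scheme \<Rightarrow> ('b, 'd) mla_scheme \<Rightarrow> bool" where
  "lie_isomorphic A B \<longleftrightarrow> (\<exists>f. lie_iso A B f)"

definition metric_isomorphic :: "('a, 'c) mla_scheme \<Rightarrow> ('b, 'd) mla_scheme \<Rightarrow> bool" where
  "metric_isomorphic A B \<longleftrightarrow> (\<exists>f. metric_lie_iso A B f)"

text \<open>Complex vectors are functions nat \<Rightarrow> complex; only finitely many
indices are used (the carrier conditions force the others to vanish).\<close>

definition cadd :: "(nat \<Rightarrow> complex) \<Rightarrow> (nat \<Rightarrow> complex) \<Rightarrow> nat \<Rightarrow> complex" where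
  "cadd a b = (\<lambda>j. a j + b j)"

definition cscale :: "real \<Rightarrow> (nat \<Rightarrow> complex) \<Rightarrow> nat \<Rightarrow> complex" where
  "cscale c a = (\<lambda>j. complex_of_real c * a j)"

definition cdiff :: "(nat \<Rightarrow> complex) \<Rightarrow> (nat \<Rightarrow> complex) \<Rightarrow> nat \<Rightarrow> complex" where
  "cdiff a b = (\<lambda>j. a j - b j)"

definition einner :: "nat \<Rightarrow> (nat \<Rightarrow> complex) \<Rightarrow> (nat \<Rightarrow> complex) \<Rightarrow> real" where
  "einner q a b = (\<Sum>j=1..q. Re (a j * cnj (b j)))"

text \<open>Elements (z, a, t); a is indexed by 0..q (a 0 = z_0, a j = z_j);
mu is indexed by 1..q.\<close>

definition osc1_inner :: "nat \<Rightarrow> (nat \<Rightarrow> complex) \<Rightarrow> (nat \<Rightarrow> complex) \<Rightarrow> real" where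
  "osc1_inner q a b = Re (a 0) * Re (b 0) - Im (a 0) * Im (b 0) + einner q a b"

definition osc1_L :: "nat \<Rightarrow> (nat \<Rightarrow> real) \<Rightarrow> (nat \<Rightarrow> complex) \<Rightarrow> nat \<Rightarrow> complex" where
  "osc1_L q \<mu> a = (\<lambda>j. if j = 0 then \<i> * cnj (a 0)
                       else if j \<le> q then \<i> * (complex_of_real (\<mu> j) * a j) else 0)"

definition osc1 :: "nat \<Rightarrow> (nat \<Rightarrow> real) \<Rightarrow> (real \<times> (nat \<Rightarrow> complex) \<times> real) mla" where
  "osc1 q \<mu> = \<lparr>
     car = {(z, a, t). \<forall>j>q. a j = 0},
     vadd = (\<lambda>(z, a, t) (z', a', t'). (z + z', cadd a a', t + t')),
     vscale = (\<lambda>c (z, a, t). (c * z, cscale c a, c * t)),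
     brk = (\<lambda>(z, a, t) (z', a', t').
              (osc1_inner q (osc1_L q \<mu> a) a',
               cdiff (cscale t (osc1_L q \<mu> a')) (cscale t' (osc1_L q \<mu> a)),
               0)),
     frm = (\<lambda>(z, a, t) (z', a', t'). z * t' + z' * t + osc1_inner q a a') \<rparr>"

text \<open>l = R^2 is represented by real \<times> real; the dual space
z = l^* is represented by real \<times> real via the dual basis:
the pair (u1,u2) is the functional t \<mapsto> u1 t1 + u2 t2. The same convention is
used for each mu_j.\<close>

definition dual_ap :: "real \<times> real \<Rightarrow> real \<times> real \<Rightarrow> real" where
  "dual_ap u t = fst u * fst t + snd u * snd t"

definition rho :: "nat \<Rightarrow> (nat \<Rightarrow> real \<times> real) \<Rightarrow> real \<times> real \<Rightarrow> (nat \<Rightarrow> complex) \<Rightarrow> nat \<Rightarrow> complex" where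
  "rho q \<mu> t a = (\<lambda>j. if 1 \<le> j \<and> j \<le> q then \<i> * (complex_of_real (dual_ap (\<mu> j) t) * a j) else 0)"

text \<open>omega(a,a') as element of the dual, given by its values on e1, e2.\<close>

definition omega :: "nat \<Rightarrow> (nat \<Rightarrow> real \<times> real) \<Rightarrow> (nat \<Rightarrow> complex) \<Rightarrow> (nat \<Rightarrow> complex) \<Rightarrow> real \<times> real" where
  "omega q \<mu> a a' = (einner q (rho q \<mu> (1, 0) a) a', einner q (rho q \<mu> (0, 1) a) a')"

definition osc2 :: "nat \<Rightarrow> (nat \<Rightarrow> real \<times> real) \<Rightarrow> ((real \<times> real) \<times> (nat \<Rightarrow> complex) \<times> (real \<times> real)) mla" where
  "osc2 q \<mu> = \<lparr>
     car = {(z, a, t). \<forall>j. (j = 0 \<or> j > q) \<longrightarrow> a j = 0},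
     vadd = (\<lambda>(z, a, t) (z', a', t'). (z + z', cadd a a', t + t')),
     vscale = (\<lambda>c (z, a, t). (c *\<^sub>R z, cscale c a, c *\<^sub>R t)),
     brk = (\<lambda>(z, a, t) (z', a', t').
              (omega q \<mu> a a', cdiff (rho q \<mu> t a') (rho q \<mu> t' a), (0, 0))),
     frm = (\<lambda>(z, a, t) (z', a', t'). dual_ap z t' + dual_ap z' t + einner q a a') \<rparr>"

definition alpha2 :: "real \<times> real \<Rightarrow> real \<times> real \<Rightarrow> real" where
  "alpha2 t t' = fst t * snd t' - snd t * fst t'"

text \<open>t^flat = alpha(t, -), written in the dual basis.\<close>

definition flat2 :: "real \<times> real \<Rightarrow> real \<times> real" where
  "flat2 t = (alpha2 t (1, 0), alpha2 t (0, 1))"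

definition dq :: "nat \<Rightarrow> (nat \<Rightarrow> real \<times> real) \<Rightarrow> ((real \<times> real) \<times> (nat \<Rightarrow> complex) \<times> real \<times> (real \<times> real)) mla" where
  "dq q \<mu> = \<lparr>
     car = {(z, a, s, t). \<forall>j. (j = 0 \<or> j > q) \<longrightarrow> a j = 0},
     vadd = (\<lambda>(z, a, s, t) (z', a', s', t'). (z + z', cadd a a', s + s', t + t')),
     vscale = (\<lambda>c (z, a, s, t). (c *\<^sub>R z, cscale c a, c * s, c *\<^sub>R t)),
     brk = (\<lambda>(z, a, s, t) (z', a', s', t').
              (omega q \<mu> a a' - s' *\<^sub>R flat2 t + s *\<^sub>R flat2 t',
               cdiff (rho q \<mu> t a') (rho q \<mu> t' a),
               alpha2 t t',
               (0, 0))),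
     frm = (\<lambda>(z, a, s, t) (z', a', s', t'). dual_ap z t' + dual_ap z' t + einner q a a' + s * s') \<rparr>"

text \<open>Vectors of R^q are functions nat \<Rightarrow> real supported on 1..q.
mu(R^2) = span{mu(e1), mu(e2)}.\<close>

definition mu_image :: "nat \<Rightarrow> (nat \<Rightarrow> real \<times> real) \<Rightarrow> (nat \<Rightarrow> real) set" where
  "mu_image q \<mu> = {(\<lambda>j. if 1 \<le> j \<and> j \<le> q then c1 * fst (\<mu> j) + c2 * snd (\<mu> j) else 0) | c1 c2. True}"

definition equiv_signed_perm :: "nat \<Rightarrow> (nat \<Rightarrow> real) set \<Rightarrow> (nat \<Rightarrow> real) set \<Rightarrow> bool" where
  "equiv_signed_perm q U U' \<longleftrightarrow>
     (\<exists>\<sigma> \<epsilon>. \<sigma> permutes {1..q} \<and> (\<forall>j. \<epsilon> j \<in> {-1, 1 :: real}) \<and>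
            (\<lambda>v j. \<epsilon> j * v (\<sigma> j)) ` U = U')"

end

theory Submission
  imports Defs "HOL-Library.Function_Algebras"
begin

text \<open>A Lie algebra isomorphism \<open>f\<close> maps the eigenspaces of \<open>(ad X)\<^sup>2\<close> onto those of
  \<open>(ad (f X))\<^sup>2\<close>. In all three families these eigenspaces are spanned by coordinate lines \<open>\<complex> e\<^sub>j\<close>,
  grouped by the value of the weight \<open>(\<mu> j t)\<^sup>2\<close>, where \<open>t\<close> is the \<open>\<l>\<close>-component of \<open>X\<close>.
  Comparing dimensions at a generic \<open>t\<close> shows that the \<open>\<l>\<close>-part \<open>T\<close> of \<open>f\<close> satisfies
  \<open>\<mu>' j \<circ> T = \<plusminus> \<mu> (\<sigma> j)\<close> for a permutation \<open>\<sigma>\<close>. For \<open>osc1\<close> and \<open>osc2\<close> such data define an isometric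
  isomorphism: permute the coordinates of \<open>\<complex>\<^sup>q\<close> and conjugate those with sign \<open>-1\<close> (for \<open>osc2\<close>,
  after replacing a singular \<open>T\<close> by an invertible map with the same property). For \<open>dq\<close> the map \<open>T\<close>
  is invertible, because \<open>\<l>\<close> meets the derived algebra trivially, so the relation says exactly
  that \<open>\<mu>(\<real>\<^sup>2)\<close> and \<open>\<mu>'(\<real>\<^sup>2)\<close> agree up to signed permutations; conversely, such a relation
  yields an isomorphism after rescaling by \<open>det T\<close>.\<close>

section \<open>Real coordinate spaces of complex vectors\<close>

lemma sum_fun_apply: "(\<Sum>x\<in>A. f x) k = (\<Sum>x\<in>A. f x k)"
  by (induction A rule: infinite_finite_induct) auto

lemma cadd_eq_plus: "cadd a b = a + b"
  by (simp add: cadd_def plus_fun_def)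

lemma cscale_cscale: "cscale r (cscale r' a) = cscale (r * r') a"
  by (simp add: cscale_def fun_eq_iff)

lemma cscale_apply: "cscale c a j = complex_of_real c * a j"
  by (simp add: cscale_def)

lemma cscale_one [simp]: "cscale 1 a = a"
  by (simp add: cscale_def)

lemma cscale_zero_left [simp]: "cscale 0 a = 0"
  and cdiff_zero [simp]: "cdiff a 0 = a"
  by (simp_all add: cscale_def cdiff_def fun_eq_iff)

lemma cscale_cadd: "cscale r (cadd a b) = cadd (cscale r a) (cscale r b)"
  and cscale_cdiff: "cscale r (cdiff a b) = cdiff (cscale r a) (cscale r b)"
  by (simp_all add: cscale_def cadd_def cdiff_def fun_eq_iff algebra_simps)

lemma cdiff_zero_right [simp]: "cdiff a (\<lambda>j. 0) = a"
  by (simp add: cdiff_def)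

interpretation cvec: vector_space cscale
  by unfold_locales (auto simp: cscale_def fun_eq_iff algebra_simps)

definition supp_space :: "nat set \<Rightarrow> (nat \<Rightarrow> complex) set" where
  "supp_space J = {a. \<forall>j. j \<notin> J \<longrightarrow> a j = 0}"

definition unit_coord :: "nat \<Rightarrow> complex \<Rightarrow> nat \<Rightarrow> complex" where
  "unit_coord j w = (\<lambda>k. if k = j then w else 0)"

definition supp_basis :: "nat set \<Rightarrow> (nat \<Rightarrow> complex) set" where
  "supp_basis J = (\<lambda>j. unit_coord j 1) ` J \<union> (\<lambda>j. unit_coord j \<i>) ` J"

lemma supp_space_cadd: "a \<in> supp_space J \<Longrightarrow> b \<in> supp_space J \<Longrightarrow> cadd a b \<in> supp_space J"
  by (simp add: supp_space_def cadd_def)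

lemma supp_space_cscale: "a \<in> supp_space J \<Longrightarrow> cscale c a \<in> supp_space J"
  by (simp add: supp_space_def cscale_def)

lemma card_supp_basis:
  assumes "finite J" shows "card (supp_basis J) = 2 * card J"
proof -
  have "inj_on (\<lambda>j. unit_coord j w) J" if "w \<noteq> 0" for w
    using that by (auto simp: inj_on_def unit_coord_def fun_eq_iff split: if_splits)
  moreover have "(\<lambda>j. unit_coord j 1) ` J \<inter> (\<lambda>j. unit_coord j \<i>) ` J = {}"
    by (auto simp: unit_coord_def fun_eq_iff split: if_splits)
  ultimately show ?thesis
    using assms by (simp add: supp_basis_def card_Un_disjoint card_image)
qed

lemma supp_basis_subset: "supp_basis J \<subseteq> supp_space J"
  by (auto simp: supp_basis_def supp_space_def unit_coord_def)

lemma span_supp_basis: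
  assumes "finite J" shows "cvec.span (supp_basis J) = supp_space J"
proof
  have "cvec.subspace (supp_space J)"
    by (auto simp: cvec.subspace_def supp_space_def cscale_def)
  then show "cvec.span (supp_basis J) \<subseteq> supp_space J"
    by (simp add: cvec.span_minimal supp_basis_subset)
next
  show "supp_space J \<subseteq> cvec.span (supp_basis J)"
  proof
    fix a assume a: "a \<in> supp_space J"
    have "a = (\<Sum>j\<in>J. cscale (Re (a j)) (unit_coord j 1) + cscale (Im (a j)) (unit_coord j \<i>))"
    proof
      fix k
      have "(\<Sum>j\<in>J. cscale (Re (a j)) (unit_coord j 1) + cscale (Im (a j)) (unit_coord j \<i>)) k
          = (\<Sum>j\<in>J. if j = k then a j else 0)"
        by (simp add: sum_fun_apply) (auto intro!: sum.cong simp: cscale_def unit_coord_def complex_eq_iff)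
      then show "a k = (\<Sum>j\<in>J. cscale (Re (a j)) (unit_coord j 1) + cscale (Im (a j)) (unit_coord j \<i>)) k"
        using a assms by (auto simp: supp_space_def)
    qed
    also have "\<dots> \<in> cvec.span (supp_basis J)"
      by (intro cvec.span_sum cvec.span_add cvec.span_scale cvec.span_base) (auto simp: supp_basis_def)
    finally show "a \<in> cvec.span (supp_basis J)" .
  qed
qed

lemma independent_supp_basis:
  assumes "finite J" shows "cvec.independent (supp_basis J)"
proof (rule cvec.independent_if_scalars_zero)
  show "finite (supp_basis J)" using assms by (simp add: supp_basis_def)
next
  fix u v assume sum0: "(\<Sum>y\<in>supp_basis J. cscale (u y) y) = 0" and v: "v \<in> supp_basis J"
  have "u (unit_coord k 1) = 0 \<and> u (unit_coord k \<i>) = 0" if k: "k \<in> J" for k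
  proof -
    let ?S1 = "(\<lambda>j. unit_coord j 1) ` J" and ?Si = "(\<lambda>j. unit_coord j \<i>) ` J"
    have disj: "?S1 \<inter> ?Si = {}" by (auto simp: unit_coord_def fun_eq_iff split: if_splits)
    have coord: "(\<Sum>y\<in>(\<lambda>j. unit_coord j w) ` J. cscale (u y) y k) = complex_of_real (u (unit_coord k w)) * w"
      if "w \<noteq> 0" for w
    proof -
      have "inj_on (\<lambda>j. unit_coord j w) J"
        using that by (auto simp: inj_on_def unit_coord_def fun_eq_iff split: if_splits)
      then show ?thesis
        using k assms by (simp add: sum.reindex cscale_def unit_coord_def if_distrib cong: if_cong)
    qed
    have "0 = (\<Sum>y\<in>?S1. cscale (u y) y k) + (\<Sum>y\<in>?Si. cscale (u y) y k)"
      using fun_cong[OF sum0, of k] assms disj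
      by (simp add: supp_basis_def sum_fun_apply sum.union_disjoint)
    also have "\<dots> = complex_of_real (u (unit_coord k 1)) + complex_of_real (u (unit_coord k \<i>)) * \<i>"
      using coord[of 1] coord[of \<i>] by simp
    finally show ?thesis by (simp add: complex_eq_iff)
  qed
  then show "u v = 0" using v by (auto simp: supp_basis_def)
qed

definition supp_restrict :: "nat set \<Rightarrow> (nat \<Rightarrow> complex) \<Rightarrow> nat \<Rightarrow> complex" where
  "supp_restrict J a = (\<lambda>j. if j \<in> J then a j else 0)"

lemma card_le_if_linear_inj_on_supp_space:
  assumes J: "finite J" and K: "finite K"
    and into: "h ` supp_space J \<subseteq> supp_space K" and inj: "inj_on h (supp_space J)"
    and add: "\<And>a b. a \<in> supp_space J \<Longrightarrow> b \<in> supp_space J \<Longrightarrow> h (cadd a b) = cadd (h a) (h b)"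
    and scale: "\<And>c a. a \<in> supp_space J \<Longrightarrow> h (cscale c a) = cscale c (h a)"
  shows "card J \<le> card K"
proof -
  \<comment> \<open>extend \<open>h\<close> to a linear map on the whole space by first projecting onto the support \<open>J\<close>\<close>
  define g where "g = h \<circ> supp_restrict J"
  have restrict_in: "supp_restrict J a \<in> supp_space J" for a
    by (auto simp: supp_restrict_def supp_space_def)
  have restrict_id: "a \<in> supp_space J \<Longrightarrow> supp_restrict J a = a" for a
    by (auto simp: supp_restrict_def supp_space_def fun_eq_iff)
  have lin_g: "Vector_Spaces.linear cscale cscale g"
    unfolding Vector_Spaces.linear_iff
  proof (intro conjI allI)
    show "vector_space cscale" by unfold_locales
    then show "vector_space cscale" .
    fix a b
    have "supp_restrict J (a + b) = cadd (supp_restrict J a) (supp_restrict J b)"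
      by (auto simp: supp_restrict_def cadd_def fun_eq_iff)
    then show "g (a + b) = g a + g b" using add[OF restrict_in restrict_in] by (simp add: g_def cadd_eq_plus)
  next
    fix c a
    have "supp_restrict J (cscale c a) = cscale c (supp_restrict J a)"
      by (auto simp: supp_restrict_def cscale_def fun_eq_iff)
    then show "g (cscale c a) = cscale c (g a)" using scale[OF restrict_in] by (simp add: g_def)
  qed
  have inj_g: "inj_on g (cvec.span (supp_basis J))"
    using inj by (auto simp: span_supp_basis[OF J] g_def inj_on_def restrict_id)
  interpret cvec_pair: vector_space_pair cscale cscale by unfold_locales
  have "cvec.independent (g ` supp_basis J)"
    using cvec_pair.linear_independent_injective_image[OF lin_g independent_supp_basis[OF J] inj_g] .
  moreover have "g ` supp_basis J \<subseteq> cvec.span (supp_basis K)"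
    using into supp_basis_subset[of J] restrict_id by (fastforce simp: span_supp_basis[OF K] g_def)
  ultimately have "card (g ` supp_basis J) \<le> card (supp_basis K)"
    using K cvec.independent_span_bound by (simp add: supp_basis_def)
  moreover have "card (g ` supp_basis J) = card (supp_basis J)"
    using inj_g cvec.span_superset[of "supp_basis J"] by (intro card_image) (auto intro: inj_on_subset)
  ultimately show ?thesis using card_supp_basis[OF J] card_supp_basis[OF K] by simp
qed

section \<open>Isomorphisms of Lie algebras and eigenspaces of ad squared\<close>

definition mla_closed :: "('a, 'c) mla_scheme \<Rightarrow> bool" where
  "mla_closed A \<longleftrightarrow> (\<forall>x\<in>car A. \<forall>y\<in>car A. vadd A x y \<in> car A \<and> brk A x y \<in> car A)
     \<and> (\<forall>c. \<forall>x\<in>car A. vscale A c x \<in> car A)"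

lemma lie_iso_in_car: "lie_iso A B f \<Longrightarrow> x \<in> car A \<Longrightarrow> f x \<in> car B"
  by (auto simp: lie_iso_def bij_betw_def)

lemma lie_iso_lincomb:
  assumes "lie_iso A B f" and "mla_closed A" and "x \<in> car A" and "y \<in> car A"
  shows "f (vadd A (vscale A c x) (vscale A d y)) = vadd B (vscale B c (f x)) (vscale B d (f y))"
  using assms by (simp add: lie_iso_def mla_closed_def)

lemma lie_iso_inv_into:
  assumes f: "lie_iso A B f" and cl: "mla_closed A"
  shows "lie_iso B A (inv_into (car A) f)"
proof -
  let ?g = "inv_into (car A) f"
  have bij: "bij_betw f (car A) (car B)" using f by (simp add: lie_iso_def)
  then have bij_g: "bij_betw ?g (car B) (car A)" by (rule bij_betw_inv_into)
  have g_in: "u \<in> car B \<Longrightarrow> ?g u \<in> car A" for u using bij_g by (auto simp: bij_betw_def)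
  have f_g: "u \<in> car B \<Longrightarrow> f (?g u) = u" for u using bij by (simp add: bij_betw_inv_into_right)
  have g_f: "x \<in> car A \<Longrightarrow> ?g (f x) = x" for x using bij by (simp add: bij_betw_inv_into_left)
  have g_hom: "?g (opB u v) = opA (?g u) (?g v)"
    if "opA (?g u) (?g v) \<in> car A" and "f (opA (?g u) (?g v)) = opB u v" for opA opB u v
    using that g_f by metis
  show ?thesis unfolding lie_iso_def
  proof (intro conjI ballI allI bij_g)
    fix u v assume u: "u \<in> car B" and v: "v \<in> car B"
    note uv = g_in[OF u] g_in[OF v] f_g[OF u] f_g[OF v]
    show "?g (vadd B u v) = vadd A (?g u) (?g v)"
      using f cl uv by (intro g_hom) (simp_all add: lie_iso_def mla_closed_def)
    show "?g (brk B u v) = brk A (?g u) (?g v)"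
      using f cl uv by (intro g_hom) (simp_all add: lie_iso_def mla_closed_def)
  next
    fix c u assume u: "u \<in> car B"
    show "?g (vscale B c u) = vscale A c (?g u)"
      using f cl g_in[OF u] f_g[OF u]
      by (intro g_hom[where opB = "\<lambda>x y. vscale B c x"]) (simp_all add: lie_iso_def mla_closed_def)
  qed
qed

definition ad_sq_eigenspace :: "('a, 'c) mla_scheme \<Rightarrow> 'a \<Rightarrow> real \<Rightarrow> 'a set" where
  "ad_sq_eigenspace A X k = {Y\<in>car A. brk A X (brk A X Y) = vscale A k Y}"

lemma lie_iso_ad_sq_eigenspace:
  assumes f: "lie_iso A B f" and cl: "mla_closed A" and X: "X \<in> car A"
    and Y: "Y \<in> ad_sq_eigenspace A X k"
  shows "f Y \<in> ad_sq_eigenspace B (f X) k"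
proof -
  have Y_car: "Y \<in> car A" using Y by (simp add: ad_sq_eigenspace_def)
  then have "brk A X Y \<in> car A" using cl X by (simp add: mla_closed_def)
  then have "brk B (f X) (brk B (f X) (f Y)) = f (brk A X (brk A X Y))"
    using f X Y_car by (simp add: lie_iso_def)
  also have "\<dots> = vscale B k (f Y)" using Y f Y_car by (simp add: ad_sq_eigenspace_def lie_iso_def)
  finally show ?thesis using lie_iso_in_car[OF f Y_car] by (simp add: ad_sq_eigenspace_def)
qed

definition linear_param :: "('a, 'c) mla_scheme \<Rightarrow> nat set \<Rightarrow> ((nat \<Rightarrow> complex) \<Rightarrow> 'a) \<Rightarrow> bool" where
  "linear_param A J r \<longleftrightarrow> inj_on r (supp_space J) \<and>
     (\<forall>a\<in>supp_space J. \<forall>b\<in>supp_space J. r (cadd a b) = vadd A (r a) (r b)) \<and>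
     (\<forall>c. \<forall>a\<in>supp_space J. r (cscale c a) = vscale A c (r a))"

lemma card_le_if_lie_iso_ad_sq_eigenspace:
  assumes f: "lie_iso A B f" and cl: "mla_closed A" and X: "X \<in> car A"
    and J: "finite J" and K: "finite K"
    and eigA: "ad_sq_eigenspace A X k = r ` supp_space J" and r: "linear_param A J r"
    and eigB: "ad_sq_eigenspace B (f X) k = r' ` supp_space K" and r': "linear_param B K r'"
  shows "card J \<le> card K"
proof -
  define h where "h a = inv_into (supp_space K) r' (f (r a))" for a
  have r_car: "r a \<in> car A" if "a \<in> supp_space J" for a
    using eigA that by (auto simp: ad_sq_eigenspace_def)
  have h: "h a \<in> supp_space K \<and> r' (h a) = f (r a)" if "a \<in> supp_space J" for a
  proof -
    have "f (r a) \<in> r' ` supp_space K"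
      using lie_iso_ad_sq_eigenspace[OF f cl X] eigA eigB that by blast
    then show ?thesis by (auto simp: h_def inv_into_into f_inv_into_f)
  qed
  have f_inj: "inj_on f (car A)" using f by (simp add: lie_iso_def bij_betw_def)
  have r'_inj: "inj_on r' (supp_space K)" using r' by (simp add: linear_param_def)
  show ?thesis
  proof (rule card_le_if_linear_inj_on_supp_space[OF J K])
    show "h ` supp_space J \<subseteq> supp_space K" using h by blast
    show "inj_on h (supp_space J)"
    proof (rule inj_onI)
      fix a b assume a: "a \<in> supp_space J" and b: "b \<in> supp_space J" and "h a = h b"
      then have "f (r a) = f (r b)" using h by metis
      then have "r a = r b" using inj_onD[OF f_inj] r_car a b by blast
      then show "a = b" using r a b by (simp add: linear_param_def inj_on_def)
    qed
  next
    fix a b assume a: "a \<in> supp_space J" and b: "b \<in> supp_space J"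
    have "r' (h (cadd a b)) = f (vadd A (r a) (r b))"
      using h[OF supp_space_cadd[OF a b]] r a b by (simp add: linear_param_def)
    also have "\<dots> = vadd B (r' (h a)) (r' (h b))"
      using f r_car[OF a] r_car[OF b] h[OF a] h[OF b] by (simp add: lie_iso_def)
    also have "\<dots> = r' (cadd (h a) (h b))"
      using r' h[OF a] h[OF b] by (simp add: linear_param_def)
    finally show "h (cadd a b) = cadd (h a) (h b)"
      using inj_onD[OF r'_inj] h[OF a] h[OF b] h[OF supp_space_cadd[OF a b]] supp_space_cadd by blast
  next
    fix c a assume a: "a \<in> supp_space J"
    have "r' (h (cscale c a)) = f (vscale A c (r a))"
      using h[OF supp_space_cscale[OF a]] r a by (simp add: linear_param_def)
    also have "\<dots> = vscale B c (r' (h a))"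
      using f r_car[OF a] h[OF a] by (simp add: lie_iso_def)
    also have "\<dots> = r' (cscale c (h a))"
      using r' h[OF a] by (simp add: linear_param_def)
    finally show "h (cscale c a) = cscale c (h a)"
      using inj_onD[OF r'_inj] h[OF a] h[OF supp_space_cscale[OF a]] supp_space_cscale by blast
  qed
qed

lemma card_eq_if_lie_iso_ad_sq_eigenspace:
  assumes f: "lie_iso A B f" and clA: "mla_closed A" and clB: "mla_closed B" and X: "X \<in> car A"
    and J: "finite J" and K: "finite K"
    and eigA: "ad_sq_eigenspace A X k = r ` supp_space J" and r: "linear_param A J r"
    and eigB: "ad_sq_eigenspace B (f X) k = r' ` supp_space K" and r': "linear_param B K r'"
  shows "card J = card K"
proof -
  have "inv_into (car A) f (f X) = X"
    using f X by (simp add: lie_iso_def bij_betw_def)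
  then have "card K \<le> card J"
    using card_le_if_lie_iso_ad_sq_eigenspace[OF lie_iso_inv_into[OF f clA] clB lie_iso_in_car[OF f X]
        K J eigB r'] eigA r by simp
  then show ?thesis using card_le_if_lie_iso_ad_sq_eigenspace[OF assms(1,2,4-)] by simp
qed

text \<open>Sums of three brackets; for \<open>dq\<close> these already exhaust the derived algebra.\<close>

definition brackets3 :: "('a, 'c) mla_scheme \<Rightarrow> 'a set" where
  "brackets3 A = {vadd A (brk A P1 Q1) (vadd A (brk A P2 Q2) (brk A P3 Q3)) | P1 Q1 P2 Q2 P3 Q3.
     P1 \<in> car A \<and> Q1 \<in> car A \<and> P2 \<in> car A \<and> Q2 \<in> car A \<and> P3 \<in> car A \<and> Q3 \<in> car A}"

lemma brackets3I:
  "P1 \<in> car A \<Longrightarrow> Q1 \<in> car A \<Longrightarrow> P2 \<in> car A \<Longrightarrow> Q2 \<in> car A \<Longrightarrow> P3 \<in> car A \<Longrightarrow> Q3 \<in> car A \<Longrightarrow>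
    vadd A (brk A P1 Q1) (vadd A (brk A P2 Q2) (brk A P3 Q3)) \<in> brackets3 A"
  unfolding brackets3_def by blast

lemma lie_iso_brackets3:
  assumes f: "lie_iso A B f" and cl: "mla_closed A" and x: "x \<in> brackets3 A"
  shows "f x \<in> brackets3 B"
proof -
  obtain P1 Q1 P2 Q2 P3 Q3 where P: "P1 \<in> car A" "Q1 \<in> car A" "P2 \<in> car A" "Q2 \<in> car A" "P3 \<in> car A" "Q3 \<in> car A"
    and x: "x = vadd A (brk A P1 Q1) (vadd A (brk A P2 Q2) (brk A P3 Q3))"
    using x by (auto simp: brackets3_def)
  have "f x = vadd B (brk B (f P1) (f Q1)) (vadd B (brk B (f P2) (f Q2)) (brk B (f P3) (f Q3)))"
    using f cl P by (simp add: x lie_iso_def mla_closed_def)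
  then show ?thesis by (simp add: brackets3I P lie_iso_in_car[OF f])
qed

section \<open>Linear functionals and matrices on the plane\<close>

lemma dual_ap_add: "dual_ap (u + v) t = dual_ap u t + dual_ap v t"
  and dual_ap_diff: "dual_ap (u - v) t = dual_ap u t - dual_ap v t"
  and dual_ap_scaleR: "dual_ap (c *\<^sub>R u) t = c * dual_ap u t"
  by (simp_all add: dual_ap_def algebra_simps)

lemma dual_ap_eqI: "(\<And>t. dual_ap u t = dual_ap v t) \<Longrightarrow> u = v"
  by (metis dual_ap_def mult_1_right mult_zero_right add_0 add.right_neutral prod.collapse
      fst_conv snd_conv)

lemma finite_zeros_on_affine_line:
  assumes "w \<noteq> 0" shows "finite {x::real. dual_ap w (1, x) = 0}"
proof (cases "snd w = 0")
  case True
  with assms have "{x::real. dual_ap w (1, x) = 0} = {}"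
    by (cases w) (auto simp: dual_ap_def zero_prod_def)
  then show ?thesis by simp
next
  case False
  then have "{x::real. dual_ap w (1, x) = 0} \<subseteq> {- fst w / snd w}"
    by (auto simp: dual_ap_def field_simps)
  then show ?thesis by (rule finite_subset) simp
qed

lemma exists_point_outside_kernels:
  assumes "finite W" and "0 \<notin> W"
  shows "\<exists>t. \<forall>w\<in>W. dual_ap w t \<noteq> 0"
proof -
  have "finite (\<Union>w\<in>W. {x::real. dual_ap w (1, x) = 0})"
    using assms by (intro finite_UN_I finite_zeros_on_affine_line) auto
  then obtain x where "x \<notin> (\<Union>w\<in>W. {x::real. dual_ap w (1, x) = 0})"
    using ex_new_if_finite[OF infinite_UNIV_char_0] by blast
  then show ?thesis by blast
qed

lemma exists_generic_point:
  fixes P N :: "(real \<times> real) set"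
  assumes "finite P" and "finite N" and "0 \<notin> N"
  shows "\<exists>t. (\<forall>u\<in>N. dual_ap u t \<noteq> 0) \<and>
     (\<forall>u\<in>P. \<forall>v\<in>P. (dual_ap u t)\<^sup>2 = (dual_ap v t)\<^sup>2 \<longrightarrow> u = v \<or> u = - v)"
proof -
  define W where "W = N \<union> ((\<lambda>(u, v). u - v) ` (P \<times> P) \<union> (\<lambda>(u, v). u + v) ` (P \<times> P) - {0})"
  have "finite W" "0 \<notin> W" using assms by (auto simp: W_def)
  then obtain t where t: "\<forall>w\<in>W. dual_ap w t \<noteq> 0" using exists_point_outside_kernels by blast
  have "u = v \<or> u = - v" if "u \<in> P" "v \<in> P" and sq: "(dual_ap u t)\<^sup>2 = (dual_ap v t)\<^sup>2" for u v
  proof -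
    have "dual_ap (u - v) t * dual_ap (u + v) t = 0"
      using sq by (simp add: dual_ap_add dual_ap_diff power2_eq_square algebra_simps)
    then have "u - v \<notin> W \<or> u + v \<notin> W" using t by auto
    then show ?thesis using that(1,2) by (auto simp: W_def eq_neg_iff_add_eq_0)
  qed
  moreover have "\<forall>u\<in>N. dual_ap u t \<noteq> 0" using t by (simp add: W_def)
  ultimately show ?thesis by blast
qed

lemma multiset_eq_if_counts_eq_on:
  assumes "\<forall>x\<in>#M. P x" and "size N = size M" and "\<And>x. P x \<Longrightarrow> count N x = count M x"
  shows "N = M"
proof -
  have filter_N: "filter_mset P N = M"
    using assms(1,3) by (intro multiset_eqI) (auto simp: not_in_iff)
  have "size N = size (filter_mset P N) + size (filter_mset (\<lambda>x. \<not> P x) N)"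
    by (metis multiset_partition size_union)
  then have "filter_mset (\<lambda>x. \<not> P x) N = {#}" using assms(2) filter_N by simp
  then show ?thesis by (metis filter_N multiset_partition add.right_neutral)
qed

lemma count_image_mset_mset_set:
  "finite A \<Longrightarrow> count (image_mset f (mset_set A)) x = card {a\<in>A. f a = x}"
  by (simp add: count_image_mset Int_def conj_commute)

lemma permutes_if_counts_eq_on_pos:
  fixes w w' :: "nat \<Rightarrow> real"
  assumes pos: "\<forall>j\<in>{1..q}. w j > 0"
    and counts: "\<And>l. l > 0 \<Longrightarrow> card {j\<in>{1..q}. w' j = l} = card {j\<in>{1..q}. w j = l}"
  shows "\<exists>\<sigma>. \<sigma> permutes {1..q} \<and> (\<forall>j\<in>{1..q}. w' j = w (\<sigma> j))"
proof -
  have "image_mset w' (mset_set {1..q}) = image_mset w (mset_set {1..q})"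
    using pos counts by (intro multiset_eq_if_counts_eq_on[where P = "\<lambda>x. x > 0"])
      (auto simp: count_image_mset_mset_set)
  then show ?thesis using image_mset_eq_implies_permutes by blast
qed

text \<open>At a generic point the squared values separate the functionals up to sign.\<close>

lemma signed_perm_if_weight_counts_eq:
  fixes F G :: "nat \<Rightarrow> real \<times> real"
  assumes F_nz: "\<forall>j\<in>{1..q}. F j \<noteq> 0"
    and counts: "\<And>t l. l > 0 \<Longrightarrow>
      card {j\<in>{1..q}. (dual_ap (G j) t)\<^sup>2 = l} = card {j\<in>{1..q}. (dual_ap (F j) t)\<^sup>2 = l}"
  shows "\<exists>\<sigma> \<epsilon>. \<sigma> permutes {1..q} \<and> (\<forall>j. \<epsilon> j \<in> {-1, 1::real}) \<and>
    (\<forall>j\<in>{1..q}. G j = \<epsilon> j *\<^sub>R F (\<sigma> j))"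
proof -
  have "0 \<notin> F ` {1..q}" using F_nz by auto
  then obtain t where t_nz: "\<forall>u\<in>F ` {1..q}. dual_ap u t \<noteq> 0"
    and t_sep: "\<forall>u\<in>F ` {1..q} \<union> G ` {1..q}. \<forall>v\<in>F ` {1..q} \<union> G ` {1..q}.
               (dual_ap u t)\<^sup>2 = (dual_ap v t)\<^sup>2 \<longrightarrow> u = v \<or> u = - v"
    using exists_generic_point[of "F ` {1..q} \<union> G ` {1..q}" "F ` {1..q}"] by blast
  have "\<forall>j\<in>{1..q}. (dual_ap (F j) t)\<^sup>2 > 0" using t_nz by simp
  from permutes_if_counts_eq_on_pos[OF this counts]
  obtain \<sigma> where \<sigma>: "\<sigma> permutes {1..q}"
    and w: "\<forall>j\<in>{1..q}. (dual_ap (G j) t)\<^sup>2 = (dual_ap (F (\<sigma> j)) t)\<^sup>2" by blast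
  define \<epsilon> where "\<epsilon> j = (if G j = F (\<sigma> j) then 1 else -1::real)" for j
  have "G j = \<epsilon> j *\<^sub>R F (\<sigma> j)" if j: "j \<in> {1..q}" for j
  proof -
    have "\<sigma> j \<in> {1..q}" using permutes_in_image[OF \<sigma>] j by simp
    then have "G j = F (\<sigma> j) \<or> G j = - F (\<sigma> j)" using t_sep w j by blast
    then show ?thesis by (auto simp: \<epsilon>_def)
  qed
  moreover have "\<forall>j. \<epsilon> j \<in> {-1, 1}" by (simp add: \<epsilon>_def)
  ultimately show ?thesis using \<sigma> by blast
qed

text \<open>A \<open>2 \<times> 2\<close> matrix is stored as the pair of its columns; \<open>dual_app M u\<close> is the functional
  \<open>u \<circ> M\<close>, in the coordinates of \<open>dual_ap\<close>.\<close>

type_synonym mat2 = "(real \<times> real) \<times> (real \<times> real)"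

definition mat_app :: "mat2 \<Rightarrow> real \<times> real \<Rightarrow> real \<times> real" where
  "mat_app M t = fst t *\<^sub>R fst M + snd t *\<^sub>R snd M"

definition mat_det :: "mat2 \<Rightarrow> real" where
  "mat_det M = alpha2 (fst M) (snd M)"

definition mat_inv :: "mat2 \<Rightarrow> mat2" where
  "mat_inv M = ((snd (snd M), - snd (fst M)) /\<^sub>R mat_det M, (- fst (snd M), fst (fst M)) /\<^sub>R mat_det M)"

definition mat_id :: mat2 where
  "mat_id = ((1, 0), (0, 1))"

definition dual_app :: "mat2 \<Rightarrow> real \<times> real \<Rightarrow> real \<times> real" where
  "dual_app M u = (dual_ap u (fst M), dual_ap u (snd M))"

lemma dual_ap_dual_app: "dual_ap (dual_app M u) t = dual_ap u (mat_app M t)"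
  by (simp add: dual_app_def mat_app_def dual_ap_def algebra_simps)

lemma dual_ap_scaleR_right: "dual_ap u (c *\<^sub>R t) = c * dual_ap u t"
  by (simp add: dual_ap_def algebra_simps)

lemma dual_app_mat_id [simp]: "dual_app mat_id u = u"
  by (simp add: mat_id_def dual_app_def dual_ap_def)

lemma mat_app_add: "mat_app M (s + t) = mat_app M s + mat_app M t"
  and mat_app_scaleR: "mat_app M (c *\<^sub>R t) = c *\<^sub>R mat_app M t"
  and mat_app_zero [simp]: "mat_app M (0, 0) = 0"
  by (simp_all add: mat_app_def algebra_simps zero_prod_def)

lemma mat_app_mat_inv:
  assumes "mat_det M \<noteq> 0"
  shows "mat_app M (mat_app (mat_inv M) s) = s" and "mat_app (mat_inv M) (mat_app M s) = s"
proof -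
  obtain p q u v where M: "M = ((p, q), (u, v))" by (metis prod.collapse)
  have d: "mat_det ((p, q), (u, v)) = p * v - q * u" by (simp add: mat_det_def alpha2_def)
  show "mat_app M (mat_app (mat_inv M) s) = s" "mat_app (mat_inv M) (mat_app M s) = s"
    using assms unfolding mat_app_def mat_inv_def
    by (simp_all add: M prod_eq_iff field_simps) (simp_all add: d algebra_simps)
qed

lemma dual_app_mat_inv:
  assumes "mat_det M \<noteq> 0"
  shows "dual_app M (dual_app (mat_inv M) u) = u" and "dual_app (mat_inv M) (dual_app M u) = u"
  by (auto intro!: dual_ap_eqI simp: dual_ap_dual_app mat_app_mat_inv[OF assms])

lemma dual_app_add: "dual_app M (u + v) = dual_app M u + dual_app M v"
  and dual_app_diff: "dual_app M (u - v) = dual_app M u - dual_app M v"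
  and dual_app_scaleR: "dual_app M (c *\<^sub>R u) = c *\<^sub>R dual_app M u"
  by (simp_all add: dual_app_def dual_ap_add dual_ap_diff dual_ap_scaleR)

lemma alpha2_zero [simp]: "alpha2 t (0, 0) = 0" "alpha2 (0, 0) t = 0"
  by (simp_all add: alpha2_def)

lemma flat2_zero [simp]: "flat2 (0, 0) = 0"
  by (simp add: flat2_def zero_prod_def)

lemma alpha2_mat_app: "alpha2 (mat_app M t) (mat_app M t') = mat_det M * alpha2 t t'"
  by (simp add: alpha2_def mat_app_def mat_det_def algebra_simps)

lemma dual_ap_flat2: "dual_ap (flat2 u) v = alpha2 u v"
  by (simp add: flat2_def alpha2_def dual_ap_def algebra_simps)

lemma flat2_mat_app:
  assumes "mat_det M \<noteq> 0"
  shows "flat2 (mat_app M t) = mat_det M *\<^sub>R dual_app (mat_inv M) (flat2 t)"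
proof (rule dual_ap_eqI)
  fix v
  have "dual_ap (mat_det M *\<^sub>R dual_app (mat_inv M) (flat2 t)) v
      = alpha2 (mat_app M t) (mat_app M (mat_app (mat_inv M) v))"
    by (simp add: dual_ap_scaleR dual_ap_dual_app dual_ap_flat2 alpha2_mat_app)
  then show "dual_ap (flat2 (mat_app M t)) v = dual_ap (mat_det M *\<^sub>R dual_app (mat_inv M) (flat2 t)) v"
    by (simp add: mat_app_mat_inv[OF assms] dual_ap_flat2)
qed

lemma alpha2_eq_0_imp_parallel:
  assumes "alpha2 w x = 0" and "w \<noteq> 0"
  shows "\<exists>c. x = c *\<^sub>R w"
proof (cases "fst w = 0")
  case True
  with assms have "snd w \<noteq> 0" "fst x = 0" by (auto simp: alpha2_def prod_eq_iff)
  then show ?thesis using True by (intro exI[of _ "snd x / snd w"]) (simp add: prod_eq_iff)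
next
  case False
  with assms(1) have "snd x = fst x / fst w * snd w" by (simp add: alpha2_def field_simps)
  then show ?thesis using False by (intro exI[of _ "fst x / fst w"]) (simp add: prod_eq_iff)
qed

lemma dual_ap_flat2_self: "dual_ap u (flat2 u) = 0"
  by (simp add: flat2_def alpha2_def dual_ap_def algebra_simps)

lemma flat2_eq_0_iff: "flat2 u = 0 \<longleftrightarrow> u = 0"
  by (auto simp: flat2_def alpha2_def prod_eq_iff)

lemma kernel_imp_multiple_of_flat2:
  assumes "dual_ap u w = 0" and "w \<noteq> 0"
  shows "\<exists>c. u = c *\<^sub>R flat2 w"
proof -
  have "alpha2 (flat2 w) u = 0" using assms(1)
    by (simp add: flat2_def alpha2_def dual_ap_def algebra_simps)
  then show ?thesis using alpha2_eq_0_imp_parallel assms(2) flat2_eq_0_iff by blast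
qed

lemma exists_nonzero_zero: "\<exists>v. v \<noteq> 0 \<and> dual_ap u v = 0"
proof (cases "u = 0")
  case True
  then show ?thesis by (intro exI[of _ "(1, 0)"]) (simp add: dual_ap_def zero_prod_def)
next
  case False
  then show ?thesis using dual_ap_flat2_self flat2_eq_0_iff by blast
qed

lemma singular_mat_kernel:
  assumes "mat_det A = 0"
  shows "\<exists>w. w \<noteq> 0 \<and> mat_app A w = 0"
proof (cases "fst A = 0")
  case True
  then show ?thesis by (intro exI[of _ "(1, 0)"]) (simp add: mat_app_def zero_prod_def)
next
  case False
  have "alpha2 (fst A) (snd A) = 0" using assms by (simp add: mat_det_def)
  then obtain c where "snd A = c *\<^sub>R fst A" using alpha2_eq_0_imp_parallel False by blast
  then show ?thesis by (intro exI[of _ "(c, -1)"]) (simp add: mat_app_def zero_prod_def)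
qed

lemma exists_invertible_mat_dual_app:
  assumes h: "h \<noteq> 0" and k: "k \<noteq> 0"
  shows "\<exists>B. mat_det B \<noteq> 0 \<and> dual_app B h = k"
proof -
  obtain h1 h2 k1 k2 where hk: "h = (h1, h2)" "k = (k1, k2)" by (cases h, cases k)
  define N where "N = h1\<^sup>2 + h2\<^sup>2"
  have N: "N > 0" using h hk by (auto simp: N_def zero_prod_def sum_power2_gt_zero_iff)
  \<comment> \<open>a rotation-dilation \<open>B\<close> sends \<open>h\<close> to \<open>k\<close>: its entries solve a linear system with determinant \<open>N\<close>\<close>
  define p where "p = (k1 * h1 + k2 * h2) / N"
  define r where "r = (k2 * h1 - k1 * h2) / N"
  have pN: "p * N = k1 * h1 + k2 * h2" and rN: "r * N = k2 * h1 - k1 * h2"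
    using N by (simp_all add: p_def r_def)
  have "(h1 * p - h2 * r) * N = h1 * (k1 * h1 + k2 * h2) - h2 * (k2 * h1 - k1 * h2)"
    "(h1 * r + h2 * p) * N = h1 * (k2 * h1 - k1 * h2) + h2 * (k1 * h1 + k2 * h2)"
    unfolding left_diff_distrib distrib_right mult.assoc pN rN by simp_all
  then have "(h1 * p - h2 * r) * N = k1 * N" "(h1 * r + h2 * p) * N = k2 * N"
    by (simp_all add: N_def power2_eq_square algebra_simps)
  then have "h1 * p - h2 * r = k1" "h1 * r + h2 * p = k2" using N by simp_all
  then have "dual_app ((p, - r), (r, p)) h = k"
    by (simp add: dual_app_def dual_ap_def hk algebra_simps)
  moreover have "p \<noteq> 0 \<or> r \<noteq> 0"
    using \<open>h1 * p - h2 * r = k1\<close> \<open>h1 * r + h2 * p = k2\<close> k hk by (auto simp: zero_prod_def)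
  then have "mat_det ((p, - r), (r, p)) \<noteq> 0"
    by (simp add: mat_det_def alpha2_def sum_squares_eq_zero_iff)
  ultimately show ?thesis by blast
qed

definition has_common_zero :: "nat \<Rightarrow> (nat \<Rightarrow> real \<times> real) \<Rightarrow> bool" where
  "has_common_zero q F \<longleftrightarrow> (\<exists>w. w \<noteq> 0 \<and> (\<forall>j\<in>{1..q}. dual_ap (F j) w = 0))"

lemma has_common_zero_transfer:
  assumes MN: "\<forall>j\<in>{1..q}. dual_app C (M j) = e j *\<^sub>R N (\<tau> j)"
    and e: "\<forall>j\<in>{1..q}. e j \<noteq> 0" and \<tau>: "\<tau> permutes {1..q}"
    and "has_common_zero q M"
  shows "has_common_zero q N"
proof -
  obtain w where w: "w \<noteq> 0" "\<forall>j\<in>{1..q}. dual_ap (M j) w = 0"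
    using assms(4) by (auto simp: has_common_zero_def)
  \<comment> \<open>a nonzero \<open>w''\<close> that \<open>C\<close> maps into the line through \<open>w\<close> is a common zero of the \<open>N k\<close>\<close>
  obtain w'' where w'': "w'' \<noteq> 0" "dual_ap (flat2 w) (mat_app C w'') = 0"
    using exists_nonzero_zero[of "dual_app C (flat2 w)"] by (auto simp: dual_ap_dual_app)
  then have "alpha2 w (mat_app C w'') = 0" by (simp add: dual_ap_flat2)
  then obtain c where c: "mat_app C w'' = c *\<^sub>R w" using alpha2_eq_0_imp_parallel w(1) by blast
  have "dual_ap (N k) w'' = 0" if k: "k \<in> {1..q}" for k
  proof -
    have "k \<in> \<tau> ` {1..q}" using permutes_image[OF \<tau>] k by simp
    then obtain j where j: "j \<in> {1..q}" "k = \<tau> j" by blast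
    then have "e j * dual_ap (N k) w'' = dual_ap (dual_app C (M j)) w''"
      using MN by (simp add: dual_ap_scaleR)
    also have "\<dots> = c * dual_ap (M j) w" by (simp add: dual_ap_dual_app c dual_ap_scaleR_right)
    also have "\<dots> = 0" using w(2) j by simp
    finally show ?thesis using e j by simp
  qed
  then show ?thesis using w''(1) unfolding has_common_zero_def by blast
qed

lemma exists_invertible_intertwiner:
  assumes F_nz: "\<forall>j\<in>{1..q}. F j \<noteq> 0" and A: "\<forall>j\<in>{1..q}. dual_app A (G j) = F j"
    and zeros: "has_common_zero q F \<Longrightarrow> has_common_zero q G"
  shows "\<exists>B. mat_det B \<noteq> 0 \<and> (\<forall>j\<in>{1..q}. dual_app B (G j) = F j)"
proof -
  consider "q = 0" | "mat_det A \<noteq> 0" | "q \<noteq> 0" "mat_det A = 0" by blast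
  then show ?thesis
  proof cases
    case 1
    then show ?thesis by (intro exI[of _ mat_id]) (simp add: mat_id_def mat_det_def alpha2_def)
  next
    case 2
    then show ?thesis using A by blast
  next
    case 3
    \<comment> \<open>a singular \<open>A\<close> forces all \<open>G j\<close> onto one line, on which an invertible matrix can replace \<open>A\<close>\<close>
    obtain w where w: "w \<noteq> 0" "mat_app A w = 0" using singular_mat_kernel 3 by blast
    have "dual_ap (F j) w = 0" if "j \<in> {1..q}" for j
      using A that w(2) dual_ap_dual_app[of A "G j" w] by (simp add: dual_ap_def)
    then have "has_common_zero q F" using w(1) unfolding has_common_zero_def by blast
    then obtain w' where w': "w' \<noteq> 0" "\<forall>j\<in>{1..q}. dual_ap (G j) w' = 0"
      using zeros by (auto simp: has_common_zero_def)
    define h where "h = flat2 w'"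
    have G: "\<exists>d. G j = d *\<^sub>R h" if "j \<in> {1..q}" for j
      using kernel_imp_multiple_of_flat2 w' that by (simp add: h_def)
    have one: "1 \<in> {1..q}" using 3 by simp
    then obtain d1 where "G 1 = d1 *\<^sub>R h" using G by blast
    then have "F 1 = d1 *\<^sub>R dual_app A h" using A one by (metis dual_app_scaleR)
    then have "dual_app A h \<noteq> 0" using F_nz one by auto
    moreover have "h \<noteq> 0" using w'(1) by (simp add: h_def flat2_eq_0_iff)
    ultimately obtain B where B: "mat_det B \<noteq> 0" "dual_app B h = dual_app A h"
      using exists_invertible_mat_dual_app by blast
    have "dual_app B (G j) = F j" if j: "j \<in> {1..q}" for j
    proof -
      obtain d where "G j = d *\<^sub>R h" using G[OF j] by blast
      then have "F j = d *\<^sub>R dual_app A h" using A j by (metis dual_app_scaleR)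
      then show ?thesis using \<open>G j = d *\<^sub>R h\<close> B(2) by (simp add: dual_app_scaleR)
    qed
    then show ?thesis using B(1) by blast
  qed
qed

section \<open>Weights of \<open>rho\<close> and signed permutations\<close>

lemma rho_cadd: "rho q \<mu> t (cadd a b) = cadd (rho q \<mu> t a) (rho q \<mu> t b)"
  and rho_cscale: "rho q \<mu> t (cscale c a) = cscale c (rho q \<mu> t a)"
  by (auto simp: rho_def cadd_def cscale_def fun_eq_iff algebra_simps)

lemma rho_zero_point [simp]: "rho q \<mu> (0, 0) a = (\<lambda>j. 0)"
  by (auto simp: rho_def dual_ap_def fun_eq_iff)

lemma rho_zero [simp]: "rho q \<mu> t (\<lambda>j. 0) = (\<lambda>j. 0)"
  by (simp add: rho_def fun_eq_iff)

lemma einner_cadd: "einner q a (cadd b c) = einner q a b + einner q a c"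
  and einner_cscale_left: "einner q (cscale r a) b = r * einner q a b"
  and einner_cscale: "einner q a (cscale r b) = r * einner q a b"
  by (simp_all add: einner_def cadd_def cscale_def sum.distrib sum_distrib_left algebra_simps)

lemma omega_cadd: "omega q \<mu> a (cadd b c) = omega q \<mu> a b + omega q \<mu> a c"
  and omega_cscale: "omega q \<mu> a (cscale r b) = r *\<^sub>R omega q \<mu> a b"
  by (simp_all add: omega_def einner_cadd einner_cscale)

lemma omega_zero_left [simp]: "omega q \<mu> (\<lambda>j. 0) b = 0"
  by (simp add: omega_def einner_def zero_prod_def)

lemma dual_ap_omega: "dual_ap (omega q \<mu> a b) s = einner q (rho q \<mu> s a) b"
proof -
  have "rho q \<mu> s a = cadd (cscale (fst s) (rho q \<mu> (1, 0) a)) (cscale (snd s) (rho q \<mu> (0, 1) a))"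
    by (auto simp: rho_def cadd_def cscale_def dual_ap_def fun_eq_iff algebra_simps)
  then show ?thesis
    by (simp add: omega_def dual_ap_def einner_def cadd_def cscale_def sum.distrib sum_distrib_left
        algebra_simps)
qed

lemma omega_cscale_cscale: "omega q \<mu> (cscale r a) (cscale r b) = (r * r) *\<^sub>R omega q \<mu> a b"
  by (simp add: omega_def rho_cscale einner_cscale_left einner_cscale)

definition weight_indices :: "nat \<Rightarrow> (nat \<Rightarrow> real \<times> real) \<Rightarrow> real \<times> real \<Rightarrow> real \<Rightarrow> nat set" where
  "weight_indices q \<mu> t l = {j\<in>{1..q}. (dual_ap (\<mu> j) t)\<^sup>2 = l}"

lemma finite_weight_indices: "finite (weight_indices q \<mu> t l)"
  by (simp add: weight_indices_def)

lemma supp_space_weight_indices: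
  "b \<in> supp_space (weight_indices q \<mu> t l) \<Longrightarrow> j = 0 \<or> j > q \<Longrightarrow> b j = 0"
  by (auto simp: supp_space_def weight_indices_def)

lemma rho_rho_eq_iff:
  assumes a: "\<forall>j. j = 0 \<or> j > q \<longrightarrow> a j = 0"
  shows "rho q \<mu> t (rho q \<mu> t a) = cscale (- l) a \<longleftrightarrow> a \<in> supp_space (weight_indices q \<mu> t l)"
proof -
  define w where "w j = (dual_ap (\<mu> j) t)\<^sup>2" for j
  have "rho q \<mu> t (rho q \<mu> t a) j = complex_of_real (- w j) * a j" for j
  proof (cases "1 \<le> j \<and> j \<le> q")
    case True
    then show ?thesis by (simp add: rho_def w_def power2_eq_square algebra_simps)
  next
    case False
    then have "a j = 0" using a by (cases "j = 0") auto
    then show ?thesis by (simp add: rho_def)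
  qed
  then have "rho q \<mu> t (rho q \<mu> t a) = cscale (- l) a \<longleftrightarrow> (\<forall>j. - w j = - l \<or> a j = 0)"
    unfolding cscale_def fun_eq_iff mult_cancel_right of_real_eq_iff by auto
  also have "\<dots> \<longleftrightarrow> a \<in> supp_space (weight_indices q \<mu> t l)"
    using a by (auto simp: supp_space_def weight_indices_def w_def not_less_eq_eq)
  finally show ?thesis .
qed

lemma rho_surj:
  assumes t: "\<forall>j\<in>{1..q}. dual_ap (\<mu> j) t \<noteq> 0" and a: "\<forall>j. j = 0 \<or> j > q \<longrightarrow> a j = 0"
  shows "\<exists>b. (\<forall>j. j = 0 \<or> j > q \<longrightarrow> b j = 0) \<and> rho q \<mu> t b = a"
proof -
  define b where "b j = (if j \<in> {1..q} then a j / (\<i> * complex_of_real (dual_ap (\<mu> j) t)) else 0)" for j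
  have "rho q \<mu> t b = a"
  proof
    fix j show "rho q \<mu> t b j = a j"
    proof (cases "j \<in> {1..q}")
      case False
      then have "a j = 0" using a by (cases "j = 0") auto
      then show ?thesis using False by (auto simp: rho_def)
    qed (use t in \<open>simp add: rho_def b_def\<close>)
  qed
  moreover have "\<forall>j. j = 0 \<or> j > q \<longrightarrow> b j = 0" by (simp add: b_def)
  ultimately show ?thesis by blast
qed

definition weights_match ::
    "nat \<Rightarrow> (nat \<Rightarrow> real \<times> real) \<Rightarrow> (nat \<Rightarrow> real \<times> real) \<Rightarrow> mat2 \<Rightarrow> (nat \<Rightarrow> nat) \<Rightarrow> (nat \<Rightarrow> real) \<Rightarrow> bool" where
  "weights_match q \<mu> \<mu>' M \<sigma> \<epsilon> \<longleftrightarrow> \<sigma> permutes {1..q} \<and> (\<forall>j. \<epsilon> j \<in> {-1, 1}) \<and>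
     (\<forall>j\<in>{1..q}. dual_app M (\<mu>' j) = \<epsilon> j *\<^sub>R \<mu> (\<sigma> j))"

lemma weights_match_apply:
  "weights_match q \<mu> \<mu>' M \<sigma> \<epsilon> \<Longrightarrow> \<forall>j\<in>{1..q}. dual_ap (\<mu>' j) (mat_app M t) = \<epsilon> j * dual_ap (\<mu> (\<sigma> j)) t"
  by (simp add: weights_match_def dual_ap_dual_app[symmetric] dual_ap_scaleR)

lemma weights_match_if_weight_counts_eq:
  assumes \<mu>_nz: "\<forall>j\<in>{1..q}. \<mu> j \<noteq> 0"
    and counts: "\<And>t l. l > 0 \<Longrightarrow>
      card (weight_indices q \<mu>' (mat_app M t) l) = card (weight_indices q \<mu> t l)"
  shows "\<exists>\<sigma> \<epsilon>. weights_match q \<mu> \<mu>' M \<sigma> \<epsilon>"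
proof -
  have "card {j\<in>{1..q}. (dual_ap (dual_app M (\<mu>' j)) t)\<^sup>2 = l} = card {j\<in>{1..q}. (dual_ap (\<mu> j) t)\<^sup>2 = l}"
    if "l > 0" for t l
    using counts[OF that] by (simp add: weight_indices_def dual_ap_dual_app)
  from signed_perm_if_weight_counts_eq[OF \<mu>_nz this] show ?thesis
    by (auto simp: weights_match_def)
qed

lemma invertible_weights_match:
  assumes \<mu>_nz: "\<forall>j\<in>{1..q}. \<mu> j \<noteq> 0"
    and A: "weights_match q \<mu> \<mu>' A \<sigma> \<epsilon>" and C: "weights_match q \<mu>' \<mu> C \<tau> \<epsilon>'"
  shows "\<exists>B. mat_det B \<noteq> 0 \<and> weights_match q \<mu> \<mu>' B \<sigma> \<epsilon>"
proof -
  define F where "F j = \<epsilon> j *\<^sub>R \<mu> (\<sigma> j)" for j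
  have \<sigma>: "\<sigma> permutes {1..q}" and \<epsilon>: "\<forall>j. \<epsilon> j \<in> {-1, 1}" using A by (simp_all add: weights_match_def)
  have "\<forall>j. \<epsilon>' j \<in> {-1, 1}" using C by (simp add: weights_match_def)
  then have \<epsilon>_nz: "\<forall>j\<in>{1..q}. \<epsilon> j \<noteq> 0" and \<epsilon>'_nz: "\<forall>j\<in>{1..q}. \<epsilon>' j \<noteq> 0"
    using \<epsilon> by (metis empty_iff insert_iff zero_neq_neg_one zero_neq_one)+
  have "F j \<noteq> 0" if "j \<in> {1..q}" for j
    using \<mu>_nz \<epsilon>_nz that permutes_in_image[OF \<sigma>] by (simp add: F_def)
  moreover have "\<forall>j\<in>{1..q}. dual_app A (\<mu>' j) = F j" using A by (simp add: weights_match_def F_def)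
  moreover have "has_common_zero q \<mu>'" if "has_common_zero q F"
  proof -
    have "has_common_zero q \<mu>"
      by (rule has_common_zero_transfer[of q mat_id F \<epsilon> \<mu> \<sigma>]) (use \<sigma> \<epsilon>_nz that in \<open>simp_all add: F_def\<close>)
    then show ?thesis
      using has_common_zero_transfer[of q C \<mu> \<epsilon>' \<mu>' \<tau>] C \<epsilon>'_nz by (simp add: weights_match_def)
  qed
  ultimately obtain B where "mat_det B \<noteq> 0" "\<forall>j\<in>{1..q}. dual_app B (\<mu>' j) = F j"
    using exists_invertible_intertwiner by blast
  then have "mat_det B \<noteq> 0 \<and> weights_match q \<mu> \<mu>' B \<sigma> \<epsilon>"
    using \<sigma> \<epsilon> by (simp add: weights_match_def F_def)
  then show ?thesis ..
qed

text \<open>The signed permutation \<open>(\<sigma>, \<epsilon>)\<close> acts on \<open>\<complex>\<^sup>q\<close> by permuting coordinates and conjugating those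
  with \<open>\<epsilon> j = -1\<close>; conjugation flips the sign of the weight of \<open>\<rho>\<close> on that coordinate.\<close>

definition conj_perm :: "nat \<Rightarrow> (nat \<Rightarrow> nat) \<Rightarrow> (nat \<Rightarrow> real) \<Rightarrow> (nat \<Rightarrow> complex) \<Rightarrow> nat \<Rightarrow> complex" where
  "conj_perm q \<sigma> \<epsilon> a j = (if j \<in> {1..q} \<and> \<epsilon> j = -1 then cnj (a (\<sigma> j)) else a (\<sigma> j))"

lemma conj_perm_cadd: "conj_perm q \<sigma> \<epsilon> (cadd a b) = cadd (conj_perm q \<sigma> \<epsilon> a) (conj_perm q \<sigma> \<epsilon> b)"
  and conj_perm_cscale: "conj_perm q \<sigma> \<epsilon> (cscale c a) = cscale c (conj_perm q \<sigma> \<epsilon> a)"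
  and conj_perm_cdiff: "conj_perm q \<sigma> \<epsilon> (cdiff a b) = cdiff (conj_perm q \<sigma> \<epsilon> a) (conj_perm q \<sigma> \<epsilon> b)"
  by (auto simp: conj_perm_def cadd_def cscale_def cdiff_def fun_eq_iff)

lemma conj_perm_inverse:
  assumes \<sigma>: "\<sigma> permutes {1..q}"
  shows "conj_perm q \<sigma> \<epsilon> (conj_perm q (inv \<sigma>) (\<epsilon> \<circ> inv \<sigma>) a) = a"
    and "conj_perm q (inv \<sigma>) (\<epsilon> \<circ> inv \<sigma>) (conj_perm q \<sigma> \<epsilon> a) = a"
  using permutes_inverses[OF \<sigma>] permutes_in_image[OF \<sigma>] permutes_in_image[OF permutes_inv[OF \<sigma>]]
  by (auto simp: conj_perm_def fun_eq_iff)

lemma conj_perm_outside: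
  assumes "\<sigma> permutes {1..q}" and "j \<notin> {1..q}"
  shows "conj_perm q \<sigma> \<epsilon> a j = a j"
  using assms by (auto simp: conj_perm_def permutes_not_in)

lemma conj_perm_in_car:
  assumes "\<sigma> permutes {1..q}" and "\<forall>j. j = 0 \<or> j > q \<longrightarrow> a j = 0"
  shows "\<forall>j. j = 0 \<or> j > q \<longrightarrow> conj_perm q \<sigma> \<epsilon> a j = 0"
  using assms by (auto simp: conj_perm_outside)

lemma conj_perm_einner:
  assumes \<sigma>: "\<sigma> permutes {1..q}"
  shows "einner q (conj_perm q \<sigma> \<epsilon> a) (conj_perm q \<sigma> \<epsilon> b) = einner q a b"
proof -
  have "einner q (conj_perm q \<sigma> \<epsilon> a) (conj_perm q \<sigma> \<epsilon> b) = (\<Sum>j=1..q. Re (a (\<sigma> j) * cnj (b (\<sigma> j))))"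
    unfolding einner_def by (intro sum.cong) (auto simp: conj_perm_def)
  also have "\<dots> = einner q a b"
    using sum.permute[OF \<sigma>, of "\<lambda>k. Re (a k * cnj (b k))"] by (simp add: einner_def comp_def)
  finally show ?thesis .
qed

lemma conj_perm_rho:
  assumes \<sigma>: "\<sigma> permutes {1..q}" and \<epsilon>: "\<forall>j. \<epsilon> j \<in> {-1, 1}"
    and weights: "\<forall>j\<in>{1..q}. dual_ap (\<mu>' j) t' = \<epsilon> j * dual_ap (\<mu> (\<sigma> j)) t"
  shows "conj_perm q \<sigma> \<epsilon> (rho q \<mu> t a) = rho q \<mu>' t' (conj_perm q \<sigma> \<epsilon> a)"
proof
  fix j
  show "conj_perm q \<sigma> \<epsilon> (rho q \<mu> t a) j = rho q \<mu>' t' (conj_perm q \<sigma> \<epsilon> a) j"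
  proof (cases "j \<in> {1..q}")
    case True
    then have "\<sigma> j \<in> {1..q}" using permutes_in_image[OF \<sigma>] by simp
    then show ?thesis using True weights \<epsilon>[rule_format, of j] by (auto simp: conj_perm_def rho_def)
  next
    case False
    then have "rho q \<mu> t a j = 0" "rho q \<mu>' t' (conj_perm q \<sigma> \<epsilon> a) j = 0" by (auto simp: rho_def)
    then show ?thesis using False by (simp add: conj_perm_outside[OF \<sigma>])
  qed
qed

lemma omega_conj_perm:
  assumes M: "mat_det M \<noteq> 0" and w: "weights_match q \<mu> \<mu>' M \<sigma> \<epsilon>"
  shows "dual_app (mat_inv M) (omega q \<mu> a b) = omega q \<mu>' (conj_perm q \<sigma> \<epsilon> a) (conj_perm q \<sigma> \<epsilon> b)"
proof (rule dual_ap_eqI)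
  fix s
  let ?u = "mat_app (mat_inv M) s"
  have \<sigma>: "\<sigma> permutes {1..q}" and \<epsilon>: "\<forall>j. \<epsilon> j \<in> {-1, 1}" using w by (simp_all add: weights_match_def)
  have weights: "\<forall>j\<in>{1..q}. dual_ap (\<mu>' j) s = \<epsilon> j * dual_ap (\<mu> (\<sigma> j)) ?u"
    using weights_match_apply[OF w, of ?u] by (simp add: mat_app_mat_inv[OF M])
  have "dual_ap (dual_app (mat_inv M) (omega q \<mu> a b)) s = einner q (rho q \<mu> ?u a) b"
    by (simp add: dual_ap_dual_app dual_ap_omega)
  also have "\<dots> = einner q (conj_perm q \<sigma> \<epsilon> (rho q \<mu> ?u a)) (conj_perm q \<sigma> \<epsilon> b)"
    by (rule conj_perm_einner[OF \<sigma>, symmetric])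
  also have "\<dots> = einner q (rho q \<mu>' s (conj_perm q \<sigma> \<epsilon> a)) (conj_perm q \<sigma> \<epsilon> b)"
    by (simp only: conj_perm_rho[OF \<sigma> \<epsilon> weights])
  finally show "dual_ap (dual_app (mat_inv M) (omega q \<mu> a b)) s =
      dual_ap (omega q \<mu>' (conj_perm q \<sigma> \<epsilon> a) (conj_perm q \<sigma> \<epsilon> b)) s"
    by (simp add: dual_ap_omega)
qed

section \<open>The algebras \<open>osc2 q \<mu>\<close>\<close>

lemma osc2_car: "(z, a, t) \<in> car (osc2 q \<mu>) \<longleftrightarrow> (\<forall>j. j = 0 \<or> j > q \<longrightarrow> a j = 0)"
  and osc2_vadd: "vadd (osc2 q \<mu>) (z, a, t) (z', a', t') = (z + z', cadd a a', t + t')"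
  and osc2_vscale: "vscale (osc2 q \<mu>) c (z, a, t) = (c *\<^sub>R z, cscale c a, c *\<^sub>R t)"
  and osc2_brk: "brk (osc2 q \<mu>) (z, a, t) (z', a', t') =
    (omega q \<mu> a a', cdiff (rho q \<mu> t a') (rho q \<mu> t' a), (0, 0))"
  and osc2_frm: "frm (osc2 q \<mu>) (z, a, t) (z', a', t') = dual_ap z t' + dual_ap z' t + einner q a a'"
  by (simp_all add: osc2_def)

lemma mla_closed_osc2: "mla_closed (osc2 q \<mu>)"
  by (auto simp: mla_closed_def osc2_def cadd_def cscale_def cdiff_def rho_def)

lemma osc2_ad_sq_eigenspace:
  assumes l: "l > 0"
  shows "ad_sq_eigenspace (osc2 q \<mu>) (z, a, t) (- l) =
    (\<lambda>b. ((-1/l) *\<^sub>R omega q \<mu> a (rho q \<mu> t b), b, (0, 0))) ` supp_space (weight_indices q \<mu> t l)"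
proof (intro set_eqI)
  fix Y :: "(real \<times> real) \<times> (nat \<Rightarrow> complex) \<times> real \<times> real"
  obtain z' b t1 t2 where Y: "Y = (z', b, (t1, t2))" by (cases Y) auto
  have "Y \<in> ad_sq_eigenspace (osc2 q \<mu>) (z, a, t) (- l) \<longleftrightarrow>
      (\<forall>j. j = 0 \<or> j > q \<longrightarrow> b j = 0) \<and>
      omega q \<mu> a (cdiff (rho q \<mu> t b) (rho q \<mu> (t1, t2) a)) = (- l) *\<^sub>R z' \<and>
      cdiff (rho q \<mu> t (cdiff (rho q \<mu> t b) (rho q \<mu> (t1, t2) a))) (rho q \<mu> (0, 0) a) = cscale (- l) b \<and>
      (0, 0) = (- l) *\<^sub>R (t1, t2)"
    by (simp add: ad_sq_eigenspace_def Y osc2_brk osc2_vscale osc2_car)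
  also have "\<dots> \<longleftrightarrow> (\<forall>j. j = 0 \<or> j > q \<longrightarrow> b j = 0) \<and> t1 = 0 \<and> t2 = 0 \<and>
      rho q \<mu> t (rho q \<mu> t b) = cscale (- l) b \<and> z' = (-1/l) *\<^sub>R omega q \<mu> a (rho q \<mu> t b)"
    using l by auto
  also have "\<dots> \<longleftrightarrow> b \<in> supp_space (weight_indices q \<mu> t l) \<and> t1 = 0 \<and> t2 = 0 \<and>
      z' = (-1/l) *\<^sub>R omega q \<mu> a (rho q \<mu> t b)"
    using rho_rho_eq_iff[where a = b] supp_space_weight_indices by blast
  finally show "Y \<in> ad_sq_eigenspace (osc2 q \<mu>) (z, a, t) (- l) \<longleftrightarrow>
      Y \<in> (\<lambda>b. ((-1/l) *\<^sub>R omega q \<mu> a (rho q \<mu> t b), b, (0, 0))) ` supp_space (weight_indices q \<mu> t l)"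
    by (auto simp: Y)
qed

lemma linear_param_osc2_eigvec:
  "linear_param (osc2 q \<mu>) J (\<lambda>b. (c *\<^sub>R omega q \<mu> a (rho q \<mu> t b), b, (0, 0)))"
  by (auto simp: linear_param_def inj_on_def osc2_vadd osc2_vscale rho_cadd rho_cscale
      omega_cadd omega_cscale scaleR_add_right)

lemma osc2_weight_counts_eq:
  assumes f: "lie_iso (osc2 q \<mu>) (osc2 q \<mu>') f" and X: "(z, a, t) \<in> car (osc2 q \<mu>)" and l: "l > 0"
  shows "card (weight_indices q \<mu>' (snd (snd (f (z, a, t)))) l) = card (weight_indices q \<mu> t l)"
proof -
  obtain z2 a2 t2 where fX: "f (z, a, t) = (z2, a2, t2)" by (cases "f (z, a, t)") auto
  then have "ad_sq_eigenspace (osc2 q \<mu>') (f (z, a, t)) (- l) =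
      (\<lambda>b. ((-1/l) *\<^sub>R omega q \<mu>' a2 (rho q \<mu>' t2 b), b, (0, 0))) ` supp_space (weight_indices q \<mu>' t2 l)"
    using osc2_ad_sq_eigenspace[OF l] by simp
  from card_eq_if_lie_iso_ad_sq_eigenspace[OF f mla_closed_osc2 mla_closed_osc2 X
      finite_weight_indices finite_weight_indices osc2_ad_sq_eigenspace[OF l] linear_param_osc2_eigvec
      this linear_param_osc2_eigvec]
  show ?thesis using fX by simp
qed

definition osc2_lmat ::
    "((real \<times> real) \<times> (nat \<Rightarrow> complex) \<times> real \<times> real \<Rightarrow> (real \<times> real) \<times> (nat \<Rightarrow> complex) \<times> real \<times> real) \<Rightarrow> mat2" where
  "osc2_lmat f = (snd (snd (f ((0, 0), (\<lambda>j. 0), (1, 0)))), snd (snd (f ((0, 0), (\<lambda>j. 0), (0, 1)))))"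

lemma osc2_lpart:
  assumes f: "lie_iso (osc2 q \<mu>) (osc2 q \<mu>') f"
  shows "snd (snd (f ((0, 0), (\<lambda>j. 0), t))) = mat_app (osc2_lmat f) t"
proof -
  let ?e = "\<lambda>t. ((0::real, 0::real), (\<lambda>j::nat. 0::complex), t)"
  have "?e t = vadd (osc2 q \<mu>) (vscale (osc2 q \<mu>) (fst t) (?e (1, 0))) (vscale (osc2 q \<mu>) (snd t) (?e (0, 1)))"
    by (simp add: osc2_vadd osc2_vscale cadd_def cscale_def prod_eq_iff)
  then have "f (?e t) = vadd (osc2 q \<mu>') (vscale (osc2 q \<mu>') (fst t) (f (?e (1, 0))))
      (vscale (osc2 q \<mu>') (snd t) (f (?e (0, 1))))"
    using lie_iso_lincomb[OF f mla_closed_osc2] by (simp add: osc2_car)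
  then show ?thesis
    by (cases "f (?e (1, 0))"; cases "f (?e (0, 1))") (simp add: osc2_vadd osc2_vscale osc2_lmat_def mat_app_def)
qed

lemma osc2_weights_match:
  assumes f: "lie_iso (osc2 q \<mu>) (osc2 q \<mu>') f" and \<mu>_nz: "\<forall>j\<in>{1..q}. \<mu> j \<noteq> 0"
  shows "\<exists>\<sigma> \<epsilon>. weights_match q \<mu> \<mu>' (osc2_lmat f) \<sigma> \<epsilon>"
proof (rule weights_match_if_weight_counts_eq[OF \<mu>_nz])
  fix t and l :: real assume "l > 0"
  from osc2_weight_counts_eq[OF f _ this, of "(0, 0)" "\<lambda>j. 0" t]
  show "card (weight_indices q \<mu>' (mat_app (osc2_lmat f) t) l) = card (weight_indices q \<mu> t l)"
    by (simp add: osc2_car osc2_lpart[OF f])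
qed

definition osc2_iso :: "nat \<Rightarrow> mat2 \<Rightarrow> (nat \<Rightarrow> nat) \<Rightarrow> (nat \<Rightarrow> real) \<Rightarrow>
    (real \<times> real) \<times> (nat \<Rightarrow> complex) \<times> real \<times> real \<Rightarrow> (real \<times> real) \<times> (nat \<Rightarrow> complex) \<times> real \<times> real" where
  "osc2_iso q M \<sigma> \<epsilon> = (\<lambda>(z, a, t). (dual_app (mat_inv M) z, conj_perm q \<sigma> \<epsilon> a, mat_app M t))"

lemma osc2_metric_iso:
  assumes M: "mat_det M \<noteq> 0" and w: "weights_match q \<mu> \<mu>' M \<sigma> \<epsilon>"
  shows "metric_lie_iso (osc2 q \<mu>) (osc2 q \<mu>') (osc2_iso q M \<sigma> \<epsilon>)"
proof -
  have \<sigma>: "\<sigma> permutes {1..q}" and \<epsilon>: "\<forall>j. \<epsilon> j \<in> {-1, 1}" using w by (simp_all add: weights_match_def)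
  note weights = weights_match_apply[OF w]
  let ?\<Psi> = "\<lambda>(z, a, t). (dual_app M z, conj_perm q (inv \<sigma>) (\<epsilon> \<circ> inv \<sigma>) a, mat_app (mat_inv M) t)"
  have "bij_betw (osc2_iso q M \<sigma> \<epsilon>) (car (osc2 q \<mu>)) (car (osc2 q \<mu>'))"
    by (rule bij_betw_byWitness[where f' = ?\<Psi>])
      (auto simp: osc2_iso_def osc2_car dual_app_mat_inv[OF M] mat_app_mat_inv[OF M]
        conj_perm_inverse[OF \<sigma>] conj_perm_in_car[OF \<sigma>] conj_perm_in_car[OF permutes_inv[OF \<sigma>]])
  then show ?thesis
    unfolding metric_lie_iso_def lie_iso_def
    by (simp add: Ball_def zero_prod_def osc2_iso_def osc2_vadd osc2_vscale osc2_brk osc2_frm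
        dual_app_add dual_app_scaleR mat_app_add mat_app_scaleR conj_perm_cadd conj_perm_cscale
        conj_perm_cdiff omega_conj_perm[OF M w] conj_perm_rho[OF \<sigma> \<epsilon> weights] conj_perm_einner[OF \<sigma>]
        dual_ap_dual_app mat_app_mat_inv[OF M])
qed

lemma osc2_lie_isomorphic_iff_metric_isomorphic:
  assumes \<mu>_nz: "\<forall>j\<in>{1..q}. \<mu> j \<noteq> 0" and \<mu>'_nz: "\<forall>j\<in>{1..q}. \<mu>' j \<noteq> 0"
  shows "lie_isomorphic (osc2 q \<mu>) (osc2 q \<mu>') \<longleftrightarrow> metric_isomorphic (osc2 q \<mu>) (osc2 q \<mu>')"
proof
  assume "lie_isomorphic (osc2 q \<mu>) (osc2 q \<mu>')"
  then obtain f where f: "lie_iso (osc2 q \<mu>) (osc2 q \<mu>') f" by (auto simp: lie_isomorphic_def)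
  then have g: "lie_iso (osc2 q \<mu>') (osc2 q \<mu>) (inv_into (car (osc2 q \<mu>)) f)"
    by (rule lie_iso_inv_into[OF _ mla_closed_osc2])
  obtain \<sigma> \<epsilon> \<tau> \<epsilon>' where "weights_match q \<mu> \<mu>' (osc2_lmat f) \<sigma> \<epsilon>"
      "weights_match q \<mu>' \<mu> (osc2_lmat (inv_into (car (osc2 q \<mu>)) f)) \<tau> \<epsilon>'"
    using osc2_weights_match[OF f \<mu>_nz] osc2_weights_match[OF g \<mu>'_nz] by blast
  then obtain B where "mat_det B \<noteq> 0" "weights_match q \<mu> \<mu>' B \<sigma> \<epsilon>"
    using invertible_weights_match[OF \<mu>_nz] by blast
  then show "metric_isomorphic (osc2 q \<mu>) (osc2 q \<mu>')"
    unfolding metric_isomorphic_def using osc2_metric_iso by blast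
qed (auto simp: metric_isomorphic_def lie_isomorphic_def metric_lie_iso_def)

section \<open>The algebras \<open>dq q \<mu>\<close>\<close>

lemma dq_car: "(z, a, s, t) \<in> car (dq q \<mu>) \<longleftrightarrow> (\<forall>j. j = 0 \<or> j > q \<longrightarrow> a j = 0)"
  and dq_vadd: "vadd (dq q \<mu>) (z, a, s, t) (z', a', s', t') = (z + z', cadd a a', s + s', t + t')"
  and dq_vscale: "vscale (dq q \<mu>) c (z, a, s, t) = (c *\<^sub>R z, cscale c a, c * s, c *\<^sub>R t)"
  and dq_brk: "brk (dq q \<mu>) (z, a, s, t) (z', a', s', t') =
    (omega q \<mu> a a' - s' *\<^sub>R flat2 t + s *\<^sub>R flat2 t', cdiff (rho q \<mu> t a') (rho q \<mu> t' a),
     alpha2 t t', (0, 0))"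
  by (simp_all add: dq_def)

lemma mla_closed_dq: "mla_closed (dq q \<mu>)"
  by (auto simp: mla_closed_def dq_def cadd_def cscale_def cdiff_def rho_def)

lemma dq_ad_sq_eigenspace:
  assumes l: "l > 0"
  shows "ad_sq_eigenspace (dq q \<mu>) (z, a, s, t) (- l) =
    (\<lambda>b. ((-1/l) *\<^sub>R omega q \<mu> a (rho q \<mu> t b), b, 0, (0, 0))) ` supp_space (weight_indices q \<mu> t l)"
proof (intro set_eqI)
  fix Y :: "(real \<times> real) \<times> (nat \<Rightarrow> complex) \<times> real \<times> real \<times> real"
  obtain z' b s' t1 t2 where Y: "Y = (z', b, s', (t1, t2))" by (cases Y) auto
  have "Y \<in> ad_sq_eigenspace (dq q \<mu>) (z, a, s, t) (- l) \<longleftrightarrow>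
      (\<forall>j. j = 0 \<or> j > q \<longrightarrow> b j = 0) \<and>
      omega q \<mu> a (cdiff (rho q \<mu> t b) (rho q \<mu> (t1, t2) a)) - alpha2 t (t1, t2) *\<^sub>R flat2 t
        = (- l) *\<^sub>R z' \<and>
      cdiff (rho q \<mu> t (cdiff (rho q \<mu> t b) (rho q \<mu> (t1, t2) a))) (rho q \<mu> (0, 0) a) = cscale (- l) b \<and>
      0 = - l * s' \<and> (0, 0) = (- l) *\<^sub>R (t1, t2)"
    by (simp add: ad_sq_eigenspace_def Y dq_brk dq_vscale dq_car)
  also have "\<dots> \<longleftrightarrow> (\<forall>j. j = 0 \<or> j > q \<longrightarrow> b j = 0) \<and> s' = 0 \<and> t1 = 0 \<and> t2 = 0 \<and>
      rho q \<mu> t (rho q \<mu> t b) = cscale (- l) b \<and> z' = (-1/l) *\<^sub>R omega q \<mu> a (rho q \<mu> t b)"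
    using l by auto
  also have "\<dots> \<longleftrightarrow> b \<in> supp_space (weight_indices q \<mu> t l) \<and> s' = 0 \<and> t1 = 0 \<and> t2 = 0 \<and>
      z' = (-1/l) *\<^sub>R omega q \<mu> a (rho q \<mu> t b)"
    using rho_rho_eq_iff[where a = b] supp_space_weight_indices by blast
  finally show "Y \<in> ad_sq_eigenspace (dq q \<mu>) (z, a, s, t) (- l) \<longleftrightarrow>
      Y \<in> (\<lambda>b. ((-1/l) *\<^sub>R omega q \<mu> a (rho q \<mu> t b), b, 0, (0, 0))) ` supp_space (weight_indices q \<mu> t l)"
    by (auto simp: Y)
qed

lemma linear_param_dq_eigvec:
  "linear_param (dq q \<mu>) J (\<lambda>b. (c *\<^sub>R omega q \<mu> a (rho q \<mu> t b), b, 0, (0, 0)))"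
  by (auto simp: linear_param_def inj_on_def dq_vadd dq_vscale rho_cadd rho_cscale
      omega_cadd omega_cscale scaleR_add_right)

lemma dq_weight_counts_eq:
  assumes f: "lie_iso (dq q \<mu>) (dq q \<mu>') f" and X: "(z, a, s, t) \<in> car (dq q \<mu>)" and l: "l > 0"
  shows "card (weight_indices q \<mu>' (snd (snd (snd (f (z, a, s, t))))) l) = card (weight_indices q \<mu> t l)"
proof -
  obtain z2 a2 s2 t2 where fX: "f (z, a, s, t) = (z2, a2, s2, t2)" by (cases "f (z, a, s, t)") auto
  then have "ad_sq_eigenspace (dq q \<mu>') (f (z, a, s, t)) (- l) =
      (\<lambda>b. ((-1/l) *\<^sub>R omega q \<mu>' a2 (rho q \<mu>' t2 b), b, 0, (0, 0))) ` supp_space (weight_indices q \<mu>' t2 l)"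
    using dq_ad_sq_eigenspace[OF l] by simp
  from card_eq_if_lie_iso_ad_sq_eigenspace[OF f mla_closed_dq mla_closed_dq X
      finite_weight_indices finite_weight_indices dq_ad_sq_eigenspace[OF l] linear_param_dq_eigvec
      this linear_param_dq_eigvec]
  show ?thesis using fX by simp
qed

definition dq_lmat ::
    "((real \<times> real) \<times> (nat \<Rightarrow> complex) \<times> real \<times> real \<times> real \<Rightarrow> (real \<times> real) \<times> (nat \<Rightarrow> complex) \<times> real \<times> real \<times> real) \<Rightarrow> mat2" where
  "dq_lmat f = (snd (snd (snd (f ((0, 0), (\<lambda>j. 0), 0, (1, 0))))), snd (snd (snd (f ((0, 0), (\<lambda>j. 0), 0, (0, 1))))))"

lemma dq_lpart:
  assumes f: "lie_iso (dq q \<mu>) (dq q \<mu>') f"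
  shows "snd (snd (snd (f ((0, 0), (\<lambda>j. 0), 0, t)))) = mat_app (dq_lmat f) t"
proof -
  let ?e = "\<lambda>t. ((0::real, 0::real), (\<lambda>j::nat. 0::complex), 0::real, t)"
  have "?e t = vadd (dq q \<mu>) (vscale (dq q \<mu>) (fst t) (?e (1, 0))) (vscale (dq q \<mu>) (snd t) (?e (0, 1)))"
    by (simp add: dq_vadd dq_vscale cadd_def cscale_def prod_eq_iff)
  then have "f (?e t) = vadd (dq q \<mu>') (vscale (dq q \<mu>') (fst t) (f (?e (1, 0))))
      (vscale (dq q \<mu>') (snd t) (f (?e (0, 1))))"
    using lie_iso_lincomb[OF f mla_closed_dq] by (simp add: dq_car)
  then show ?thesis
    by (cases "f (?e (1, 0))"; cases "f (?e (0, 1))") (simp add: dq_vadd dq_vscale dq_lmat_def mat_app_def)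
qed

lemma dq_weights_match:
  assumes f: "lie_iso (dq q \<mu>) (dq q \<mu>') f" and \<mu>_nz: "\<forall>j\<in>{1..q}. \<mu> j \<noteq> 0"
  shows "\<exists>\<sigma> \<epsilon>. weights_match q \<mu> \<mu>' (dq_lmat f) \<sigma> \<epsilon>"
proof (rule weights_match_if_weight_counts_eq[OF \<mu>_nz])
  fix t and l :: real assume "l > 0"
  from dq_weight_counts_eq[OF f _ this, of "(0, 0)" "\<lambda>j. 0" 0 t]
  show "card (weight_indices q \<mu>' (mat_app (dq_lmat f) t) l) = card (weight_indices q \<mu> t l)"
    by (simp add: dq_car dq_lpart[OF f])
qed

definition dq_iso :: "nat \<Rightarrow> mat2 \<Rightarrow> (nat \<Rightarrow> nat) \<Rightarrow> (nat \<Rightarrow> real) \<Rightarrow>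
    (real \<times> real) \<times> (nat \<Rightarrow> complex) \<times> real \<times> real \<times> real \<Rightarrow>
    (real \<times> real) \<times> (nat \<Rightarrow> complex) \<times> real \<times> real \<times> real" where
  "dq_iso q M \<sigma> \<epsilon> = (\<lambda>(z, a, s, t). ((mat_det M)\<^sup>2 *\<^sub>R dual_app (mat_inv M) z,
      cscale \<bar>mat_det M\<bar> (conj_perm q \<sigma> \<epsilon> a), mat_det M * s, mat_app M t))"

lemma dq_iso_center:
  assumes M: "mat_det M \<noteq> 0" and w: "weights_match q \<mu> \<mu>' M \<sigma> \<epsilon>"
  shows "(mat_det M)\<^sup>2 *\<^sub>R dual_app (mat_inv M) (omega q \<mu> a a' - s' *\<^sub>R flat2 t + s *\<^sub>R flat2 t') =
    omega q \<mu>' (cscale \<bar>mat_det M\<bar> (conj_perm q \<sigma> \<epsilon> a)) (cscale \<bar>mat_det M\<bar> (conj_perm q \<sigma> \<epsilon> a'))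
      - (mat_det M * s') *\<^sub>R flat2 (mat_app M t) + (mat_det M * s) *\<^sub>R flat2 (mat_app M t')"
proof -
  have "\<bar>mat_det M\<bar> * \<bar>mat_det M\<bar> = (mat_det M)\<^sup>2" by (simp add: power2_eq_square abs_mult_self_eq)
  then show ?thesis
    by (simp add: omega_cscale_cscale omega_conj_perm[OF M w] flat2_mat_app[OF M] dual_app_add
        dual_app_diff dual_app_scaleR scaleR_add_right scaleR_diff_right power2_eq_square ac_simps)
qed

lemma dq_lie_iso:
  assumes M: "mat_det M \<noteq> 0" and w: "weights_match q \<mu> \<mu>' M \<sigma> \<epsilon>"
  shows "lie_iso (dq q \<mu>) (dq q \<mu>') (dq_iso q M \<sigma> \<epsilon>)"
proof -
  have \<sigma>: "\<sigma> permutes {1..q}" and \<epsilon>: "\<forall>j. \<epsilon> j \<in> {-1, 1}" using w by (simp_all add: weights_match_def)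
  note weights = weights_match_apply[OF w]
  let ?d = "mat_det M"
  let ?\<Psi> = "\<lambda>(z, a, s, t). (dual_app M ((1 / ?d\<^sup>2) *\<^sub>R z),
      cscale (1 / \<bar>?d\<bar>) (conj_perm q (inv \<sigma>) (\<epsilon> \<circ> inv \<sigma>) a), s / ?d, mat_app (mat_inv M) t)"
  have "bij_betw (dq_iso q M \<sigma> \<epsilon>) (car (dq q \<mu>)) (car (dq q \<mu>'))"
    by (rule bij_betw_byWitness[where f' = ?\<Psi>])
      (use M in \<open>auto simp: dq_iso_def dq_car dual_app_mat_inv[OF M] mat_app_mat_inv[OF M] dual_app_scaleR
        conj_perm_cscale cscale_cscale conj_perm_inverse[OF \<sigma>] conj_perm_in_car[OF \<sigma>]
        conj_perm_in_car[OF permutes_inv[OF \<sigma>]] cscale_apply\<close>)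
  moreover have "dq_iso q M \<sigma> \<epsilon> (vadd (dq q \<mu>) (z, a, s, t) (z', a', s', t')) =
      vadd (dq q \<mu>') (dq_iso q M \<sigma> \<epsilon> (z, a, s, t)) (dq_iso q M \<sigma> \<epsilon> (z', a', s', t'))" for z a s t z' a' s' t'
    by (simp add: dq_iso_def dq_vadd dual_app_add mat_app_add conj_perm_cadd cscale_cadd
        scaleR_add_right distrib_left)
  moreover have "dq_iso q M \<sigma> \<epsilon> (vscale (dq q \<mu>) c (z, a, s, t)) =
      vscale (dq q \<mu>') c (dq_iso q M \<sigma> \<epsilon> (z, a, s, t))" for c z a s t
    by (simp add: dq_iso_def dq_vscale dual_app_scaleR mat_app_scaleR conj_perm_cscale cscale_cscale
        mult.commute mult.left_commute)
  moreover have "dq_iso q M \<sigma> \<epsilon> (brk (dq q \<mu>) (z, a, s, t) (z', a', s', t')) =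
      brk (dq q \<mu>') (dq_iso q M \<sigma> \<epsilon> (z, a, s, t)) (dq_iso q M \<sigma> \<epsilon> (z', a', s', t'))" for z a s t z' a' s' t'
    by (simp add: dq_iso_def dq_brk dq_iso_center[OF M w] conj_perm_cdiff conj_perm_rho[OF \<sigma> \<epsilon> weights]
        cscale_cdiff rho_cscale alpha2_mat_app zero_prod_def)
  ultimately show ?thesis unfolding lie_iso_def by (simp add: Ball_def)
qed

lemma dq_brackets3:
  assumes \<mu>_nz: "\<forall>j\<in>{1..q}. \<mu> j \<noteq> 0"
  shows "brackets3 (dq q \<mu>) = {(z, a, s, t). (z, a, s, t) \<in> car (dq q \<mu>) \<and> t = 0}"
proof (intro subset_antisym subsetI)
  fix x assume "x \<in> brackets3 (dq q \<mu>)"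
  then obtain P1 Q1 P2 Q2 P3 Q3 where P: "P1 \<in> car (dq q \<mu>)" "Q1 \<in> car (dq q \<mu>)" "P2 \<in> car (dq q \<mu>)"
      "Q2 \<in> car (dq q \<mu>)" "P3 \<in> car (dq q \<mu>)" "Q3 \<in> car (dq q \<mu>)"
    and x: "x = vadd (dq q \<mu>) (brk (dq q \<mu>) P1 Q1) (vadd (dq q \<mu>) (brk (dq q \<mu>) P2 Q2) (brk (dq q \<mu>) P3 Q3))"
    by (auto simp: brackets3_def)
  have "x \<in> car (dq q \<mu>)" using mla_closed_dq P by (simp add: x mla_closed_def)
  moreover have "snd (snd (snd (brk (dq q \<mu>) P Q))) = 0" for P Q
    by (cases P; cases Q) (simp add: dq_brk zero_prod_def)
  moreover have "snd (snd (snd (vadd (dq q \<mu>) P Q))) = snd (snd (snd P)) + snd (snd (snd Q))" for P Q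
    by (cases P; cases Q) (simp add: dq_vadd)
  ultimately have "x \<in> car (dq q \<mu>)" "snd (snd (snd x)) = 0" by (simp_all add: x)
  then show "x \<in> {(z, a, s, t). (z, a, s, t) \<in> car (dq q \<mu>) \<and> t = 0}" by auto
next
  fix x assume "x \<in> {(z, a, s, t). (z, a, s, t) \<in> car (dq q \<mu>) \<and> t = 0}"
  then obtain z a s where x: "x = (z, a, s, 0)" and a: "\<forall>j. j = 0 \<or> j > q \<longrightarrow> a j = 0"
    by (auto simp: dq_car)
  have "0 \<notin> \<mu> ` {1..q}" using \<mu>_nz by auto
  then obtain t0 where "\<forall>w\<in>\<mu> ` {1..q}. dual_ap w t0 \<noteq> 0"
    using exists_point_outside_kernels[of "\<mu> ` {1..q}"] by blast
  then have "\<forall>j\<in>{1..q}. dual_ap (\<mu> j) t0 \<noteq> 0" by blast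
  then obtain b where b: "\<forall>j. j = 0 \<or> j > q \<longrightarrow> b j = 0" "rho q \<mu> t0 b = a"
    using rho_surj[OF _ a] by blast
  let ?e = "\<lambda>b s t. ((0::real, 0::real), b, s::real, t)"
  \<comment> \<open>\<open>z\<close> comes from \<open>[s, t]\<close>, \<open>a\<close> from \<open>[t, a]\<close> and the \<open>\<real>\<close>-component from \<open>[t, t']\<close>\<close>
  have "x = vadd (dq q \<mu>) (brk (dq q \<mu>) (?e (\<lambda>j. 0) 1 0) (?e (\<lambda>j. 0) 0 (snd z, - fst z)))
      (vadd (dq q \<mu>) (brk (dq q \<mu>) (?e (\<lambda>j. 0) 0 t0) (?e b 0 0))
        (brk (dq q \<mu>) (?e (\<lambda>j. 0) 0 (1, 0)) (?e (\<lambda>j. 0) 0 (0, s))))"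
    by (cases z) (simp add: x b(2) dq_brk dq_vadd flat2_def alpha2_def cadd_def cdiff_def zero_prod_def)
  moreover have "?e b 0 0 \<in> car (dq q \<mu>)" "?e (\<lambda>j. 0) s t \<in> car (dq q \<mu>)" for s t
    using b(1) by (simp_all add: dq_car)
  ultimately show "x \<in> brackets3 (dq q \<mu>)" by (simp only:) (intro brackets3I; simp)
qed

lemma dq_lmat_invertible:
  assumes f: "lie_iso (dq q \<mu>) (dq q \<mu>') f"
    and \<mu>_nz: "\<forall>j\<in>{1..q}. \<mu> j \<noteq> 0" and \<mu>'_nz: "\<forall>j\<in>{1..q}. \<mu>' j \<noteq> 0"
  shows "mat_det (dq_lmat f) \<noteq> 0"
proof
  assume "mat_det (dq_lmat f) = 0"
  then obtain w where w: "w \<noteq> 0" "mat_app (dq_lmat f) w = 0" using singular_mat_kernel by blast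
  define X where "X = ((0::real, 0::real), (\<lambda>j::nat. 0::complex), 0::real, w)"
  have X: "X \<in> car (dq q \<mu>)" by (simp add: X_def dq_car)
  \<comment> \<open>\<open>f X\<close> has vanishing \<open>\<l>\<close>-part, so it is a sum of brackets, and then so is \<open>X\<close>\<close>
  have "f X \<in> brackets3 (dq q \<mu>')"
    using lie_iso_in_car[OF f X] dq_lpart[OF f, of w] w(2)
    by (auto simp: dq_brackets3[OF \<mu>'_nz] X_def)
  then have "inv_into (car (dq q \<mu>)) f (f X) \<in> brackets3 (dq q \<mu>)"
    by (rule lie_iso_brackets3[OF lie_iso_inv_into[OF f mla_closed_dq] mla_closed_dq])
  then have "X \<in> brackets3 (dq q \<mu>)"
    using f X by (simp add: lie_iso_def bij_betw_def)
  then show False using w(1) by (simp add: dq_brackets3[OF \<mu>_nz] X_def)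
qed

definition weight_vec :: "nat \<Rightarrow> (nat \<Rightarrow> real \<times> real) \<Rightarrow> real \<times> real \<Rightarrow> nat \<Rightarrow> real" where
  "weight_vec q \<mu> c j = (if j \<in> {1..q} then dual_ap (\<mu> j) c else 0)"

lemma mu_image_eq_range: "mu_image q \<mu> = range (weight_vec q \<mu>)"
proof -
  have "weight_vec q \<mu> (c1, c2) = (\<lambda>j. if 1 \<le> j \<and> j \<le> q then c1 * fst (\<mu> j) + c2 * snd (\<mu> j) else 0)"
    for c1 c2 by (auto simp: weight_vec_def dual_ap_def fun_eq_iff)
  then show ?thesis unfolding mu_image_def by (auto simp: image_def)
qed

lemma signed_perm_weight_vec:
  assumes "\<sigma> permutes {1..q}"
  shows "(\<lambda>j. \<epsilon> j * weight_vec q \<mu> c (\<sigma> j)) = weight_vec q (\<lambda>j. \<epsilon> j *\<^sub>R \<mu> (\<sigma> j)) c"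
  using assms permutes_in_image[OF assms] by (auto simp: weight_vec_def fun_eq_iff permutes_not_in dual_ap_scaleR)

lemma equiv_signed_perm_iff:
  assumes "\<sigma> permutes {1..q}"
  shows "(\<lambda>v j. \<epsilon> j * v (\<sigma> j)) ` mu_image q \<mu> = mu_image q \<mu>' \<longleftrightarrow>
    range (weight_vec q (\<lambda>j. \<epsilon> j *\<^sub>R \<mu> (\<sigma> j))) = range (weight_vec q \<mu>')"
  by (simp add: mu_image_eq_range image_image signed_perm_weight_vec[OF assms])

lemma exists_mat_if_range_weight_vec_subset:
  assumes "range (weight_vec q F) \<subseteq> range (weight_vec q G)"
  shows "\<exists>M. \<forall>j\<in>{1..q}. dual_app M (G j) = F j"
proof -
  obtain p1 p2 where p: "weight_vec q F (1, 0) = weight_vec q G p1" "weight_vec q F (0, 1) = weight_vec q G p2"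
    using assms by blast
  have "dual_app (p1, p2) (G j) = F j" if "j \<in> {1..q}" for j
    using fun_cong[OF p(1), of j] fun_cong[OF p(2), of j] that
    by (simp add: weight_vec_def dual_app_def dual_ap_def prod_eq_iff)
  then show ?thesis by blast
qed

lemma range_weight_vec_mat_app:
  assumes "mat_det M \<noteq> 0"
  shows "range (\<lambda>c. weight_vec q \<mu> (mat_app M c)) = range (weight_vec q \<mu>)"
proof -
  have "weight_vec q \<mu> c = weight_vec q \<mu> (mat_app M (mat_app (mat_inv M) c))" for c
    by (simp add: mat_app_mat_inv[OF assms])
  then show ?thesis by blast
qed

lemma dq_lie_isomorphic_iff:
  assumes \<mu>_nz: "\<forall>j\<in>{1..q}. \<mu> j \<noteq> 0" and \<mu>'_nz: "\<forall>j\<in>{1..q}. \<mu>' j \<noteq> 0"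
  shows "lie_isomorphic (dq q \<mu>) (dq q \<mu>') \<longleftrightarrow> equiv_signed_perm q (mu_image q \<mu>) (mu_image q \<mu>')"
proof
  assume "lie_isomorphic (dq q \<mu>) (dq q \<mu>')"
  then obtain f where f: "lie_iso (dq q \<mu>) (dq q \<mu>') f" by (auto simp: lie_isomorphic_def)
  obtain \<sigma> \<epsilon> where w: "weights_match q \<mu> \<mu>' (dq_lmat f) \<sigma> \<epsilon>" using dq_weights_match[OF f \<mu>_nz] by blast
  then have \<sigma>: "\<sigma> permutes {1..q}" and "\<forall>j. \<epsilon> j \<in> {-1, 1}" by (simp_all add: weights_match_def)
  have "weight_vec q (\<lambda>j. \<epsilon> j *\<^sub>R \<mu> (\<sigma> j)) = (\<lambda>c. weight_vec q \<mu>' (mat_app (dq_lmat f) c))"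
    using w by (auto simp: weights_match_def weight_vec_def fun_eq_iff dual_ap_dual_app[symmetric])
  then have "range (weight_vec q (\<lambda>j. \<epsilon> j *\<^sub>R \<mu> (\<sigma> j))) = range (weight_vec q \<mu>')"
    using range_weight_vec_mat_app[OF dq_lmat_invertible[OF f \<mu>_nz \<mu>'_nz]] by simp
  then show "equiv_signed_perm q (mu_image q \<mu>) (mu_image q \<mu>')"
    unfolding equiv_signed_perm_def using equiv_signed_perm_iff[OF \<sigma>] \<sigma> \<open>\<forall>j. \<epsilon> j \<in> {-1, 1}\<close> by blast
next
  assume "equiv_signed_perm q (mu_image q \<mu>) (mu_image q \<mu>')"
  then obtain \<sigma> \<epsilon> where \<sigma>: "\<sigma> permutes {1..q}" and \<epsilon>: "\<forall>j. \<epsilon> j \<in> {-1, 1::real}"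
    and img: "(\<lambda>v j. \<epsilon> j * v (\<sigma> j)) ` mu_image q \<mu> = mu_image q \<mu>'"
    unfolding equiv_signed_perm_def by blast
  let ?F = "\<lambda>j. \<epsilon> j *\<^sub>R \<mu> (\<sigma> j)"
  have "range (weight_vec q ?F) = range (weight_vec q \<mu>')"
    using img equiv_signed_perm_iff[OF \<sigma>] by blast
  then have "range (weight_vec q ?F) \<subseteq> range (weight_vec q \<mu>')" "range (weight_vec q \<mu>') \<subseteq> range (weight_vec q ?F)"
    by simp_all
  from exists_mat_if_range_weight_vec_subset[OF this(1)] exists_mat_if_range_weight_vec_subset[OF this(2)]
  obtain P C where P: "\<forall>j\<in>{1..q}. dual_app P (\<mu>' j) = ?F j" and C: "\<forall>j\<in>{1..q}. dual_app C (?F j) = \<mu>' j"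
    by blast
  \<comment> \<open>compare \<open>\<mu>'\<close> with the signed permutation of \<open>\<mu>\<close>, both ways, through the identity permutation\<close>
  have "\<epsilon> j \<noteq> 0" for j using \<epsilon>[rule_format, of j] by auto
  then have F_nz: "\<forall>j\<in>{1..q}. ?F j \<noteq> 0" using \<mu>_nz permutes_in_image[OF \<sigma>] by simp
  have "weights_match q ?F \<mu>' P id (\<lambda>j. 1)" "weights_match q \<mu>' ?F C id (\<lambda>j. 1)"
    using P C by (simp_all add: weights_match_def permutes_id)
  from invertible_weights_match[OF F_nz this]
  obtain B where "mat_det B \<noteq> 0" "weights_match q ?F \<mu>' B id (\<lambda>j. 1)" by blast
  then have "mat_det B \<noteq> 0" "weights_match q \<mu> \<mu>' B \<sigma> \<epsilon>"
    using \<sigma> \<epsilon> by (simp_all add: weights_match_def)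
  then show "lie_isomorphic (dq q \<mu>) (dq q \<mu>')"
    unfolding lie_isomorphic_def using dq_lie_iso by blast
qed

section \<open>The algebras \<open>osc1 q \<mu>\<close>\<close>

lemma osc1_car: "(z, a, t) \<in> car (osc1 q \<mu>) \<longleftrightarrow> (\<forall>j>q. a j = 0)"
  and osc1_vadd: "vadd (osc1 q \<mu>) (z, a, t) (z', a', t') = (z + z', cadd a a', t + t')"
  and osc1_vscale: "vscale (osc1 q \<mu>) c (z, a, t) = (c * z, cscale c a, c * t)"
  and osc1_brk: "brk (osc1 q \<mu>) (z, a, t) (z', a', t') =
    (osc1_inner q (osc1_L q \<mu> a) a', cdiff (cscale t (osc1_L q \<mu> a')) (cscale t' (osc1_L q \<mu> a)), 0)"
  and osc1_frm: "frm (osc1 q \<mu>) (z, a, t) (z', a', t') = z * t' + z' * t + osc1_inner q a a'"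
  by (simp_all add: osc1_def)

lemma mla_closed_osc1: "mla_closed (osc1 q \<mu>)"
  by (auto simp: mla_closed_def osc1_def cadd_def cscale_def cdiff_def osc1_L_def)

lemma osc1_L_cadd: "osc1_L q \<mu> (cadd a b) = cadd (osc1_L q \<mu> a) (osc1_L q \<mu> b)"
  and osc1_L_cscale: "osc1_L q \<mu> (cscale c a) = cscale c (osc1_L q \<mu> a)"
  by (auto simp: osc1_L_def cadd_def cscale_def fun_eq_iff algebra_simps)

lemma osc1_inner_cadd: "osc1_inner q c (cadd a b) = osc1_inner q c a + osc1_inner q c b"
  and osc1_inner_cscale: "osc1_inner q c (cscale r a) = r * osc1_inner q c a"
  using einner_cadd[of q c a b] einner_cscale[of q c r a]
  by (simp_all add: osc1_inner_def cadd_def cscale_def algebra_simps)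

definition osc1_weight_indices :: "nat \<Rightarrow> (nat \<Rightarrow> real) \<Rightarrow> real \<Rightarrow> real \<Rightarrow> nat set" where
  "osc1_weight_indices q \<mu> t k = {j. j = 0 \<and> t\<^sup>2 = k} \<union> {j\<in>{1..q}. - (t\<^sup>2 * (\<mu> j)\<^sup>2) = k}"

lemma osc1_L_L_eq_iff:
  assumes a: "\<forall>j>q. a j = 0"
  shows "cscale t (osc1_L q \<mu> (cscale t (osc1_L q \<mu> a))) = cscale k a \<longleftrightarrow>
    a \<in> supp_space (osc1_weight_indices q \<mu> t k)"
proof -
  define w where "w j = (if j = 0 then t\<^sup>2 else - (t\<^sup>2 * (\<mu> j)\<^sup>2))" for j
  have "cscale t (osc1_L q \<mu> (cscale t (osc1_L q \<mu> a))) j = complex_of_real (w j) * a j" for j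
  proof (cases "j = 0 \<or> j > q")
    case True
    have "\<i> * (x * (\<i> * y)) = - (x * y)" for x y :: complex
      by (metis complex_i_mult_minus mult.left_commute)
    then have "\<i> * cnj (complex_of_real t * (\<i> * cnj z)) = complex_of_real t * z" for z by simp
    then show ?thesis using True a
      by (auto simp: osc1_L_def cscale_def w_def power2_eq_square)
  next
    case False
    then show ?thesis by (simp add: osc1_L_def cscale_def w_def power2_eq_square algebra_simps)
  qed
  then have "cscale t (osc1_L q \<mu> (cscale t (osc1_L q \<mu> a))) = cscale k a \<longleftrightarrow> (\<forall>j. w j = k \<or> a j = 0)"
    unfolding cscale_def fun_eq_iff mult_cancel_right of_real_eq_iff by auto
  also have "\<dots> \<longleftrightarrow> a \<in> supp_space (osc1_weight_indices q \<mu> t k)"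
    using a by (auto simp: supp_space_def osc1_weight_indices_def w_def not_less_eq_eq)
  finally show ?thesis .
qed

lemma osc1_ad_sq_eigenspace:
  assumes k: "k \<noteq> 0"
  shows "ad_sq_eigenspace (osc1 q \<mu>) (z, a, t) k =
    (\<lambda>b. ((1/k) * osc1_inner q (osc1_L q \<mu> a) (cscale t (osc1_L q \<mu> b)), b, 0))
      ` supp_space (osc1_weight_indices q \<mu> t k)"
proof (intro set_eqI)
  fix Y :: "real \<times> (nat \<Rightarrow> complex) \<times> real"
  obtain z' b t' where Y: "Y = (z', b, t')" by (cases Y) auto
  have "Y \<in> ad_sq_eigenspace (osc1 q \<mu>) (z, a, t) k \<longleftrightarrow> (\<forall>j>q. b j = 0) \<and>
      osc1_inner q (osc1_L q \<mu> a) (cdiff (cscale t (osc1_L q \<mu> b)) (cscale t' (osc1_L q \<mu> a))) = k * z' \<and>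
      cdiff (cscale t (osc1_L q \<mu> (cdiff (cscale t (osc1_L q \<mu> b)) (cscale t' (osc1_L q \<mu> a)))))
        (cscale 0 (osc1_L q \<mu> a)) = cscale k b \<and> 0 = k * t'"
    by (simp add: ad_sq_eigenspace_def Y osc1_brk osc1_vscale osc1_car)
  also have "\<dots> \<longleftrightarrow> (\<forall>j>q. b j = 0) \<and> t' = 0 \<and>
      cscale t (osc1_L q \<mu> (cscale t (osc1_L q \<mu> b))) = cscale k b \<and>
      z' = (1/k) * osc1_inner q (osc1_L q \<mu> a) (cscale t (osc1_L q \<mu> b))"
    using k by (auto simp: field_simps)
  also have "\<dots> \<longleftrightarrow> b \<in> supp_space (osc1_weight_indices q \<mu> t k) \<and> t' = 0 \<and>
      z' = (1/k) * osc1_inner q (osc1_L q \<mu> a) (cscale t (osc1_L q \<mu> b))"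
    using osc1_L_L_eq_iff[where a = b] by (auto simp: supp_space_def osc1_weight_indices_def)
  finally show "Y \<in> ad_sq_eigenspace (osc1 q \<mu>) (z, a, t) k \<longleftrightarrow> Y \<in> (\<lambda>b. ((1/k) * osc1_inner q (osc1_L q \<mu> a)
      (cscale t (osc1_L q \<mu> b)), b, 0)) ` supp_space (osc1_weight_indices q \<mu> t k)"
    by (auto simp: Y)
qed

lemma linear_param_osc1_eigvec:
  "linear_param (osc1 q \<mu>) J (\<lambda>b. (c * osc1_inner q (osc1_L q \<mu> a) (cscale t (osc1_L q \<mu> b)), b, 0))"
  by (auto simp: linear_param_def inj_on_def osc1_vadd osc1_vscale osc1_L_cadd osc1_L_cscale
      cscale_cadd cscale_cscale osc1_inner_cadd osc1_inner_cscale algebra_simps)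

lemma finite_osc1_weight_indices: "finite (osc1_weight_indices q \<mu> t k)"
proof -
  have "osc1_weight_indices q \<mu> t k \<subseteq> {0..q}" by (auto simp: osc1_weight_indices_def)
  then show ?thesis by (rule finite_subset) simp
qed

lemma osc1_weight_counts_eq:
  assumes f: "lie_iso (osc1 q \<mu>) (osc1 q \<mu>') f" and X: "(z, a, t) \<in> car (osc1 q \<mu>)" and k: "k \<noteq> 0"
  shows "card (osc1_weight_indices q \<mu>' (snd (snd (f (z, a, t)))) k) = card (osc1_weight_indices q \<mu> t k)"
proof -
  obtain z2 a2 t2 where fX: "f (z, a, t) = (z2, a2, t2)" by (cases "f (z, a, t)") auto
  then have "ad_sq_eigenspace (osc1 q \<mu>') (f (z, a, t)) k =
      (\<lambda>b. ((1/k) * osc1_inner q (osc1_L q \<mu>' a2) (cscale t2 (osc1_L q \<mu>' b)), b, 0))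
        ` supp_space (osc1_weight_indices q \<mu>' t2 k)"
    using osc1_ad_sq_eigenspace[OF k] by simp
  from card_eq_if_lie_iso_ad_sq_eigenspace[OF f mla_closed_osc1 mla_closed_osc1 X
      finite_osc1_weight_indices finite_osc1_weight_indices osc1_ad_sq_eigenspace[OF k]
      linear_param_osc1_eigvec this linear_param_osc1_eigvec]
  show ?thesis using fX by simp
qed

lemma osc1_signed_perm:
  assumes f: "lie_iso (osc1 q \<mu>) (osc1 q \<mu>') f" and \<mu>_nz: "\<forall>j\<in>{1..q}. \<mu> j \<noteq> 0"
  shows "\<exists>\<sigma> \<epsilon>. \<sigma> permutes {1..q} \<and> (\<forall>j. \<epsilon> j \<in> {-1, 1::real}) \<and> (\<forall>j\<in>{1..q}. \<mu>' j = \<epsilon> j * \<mu> (\<sigma> j))"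
proof -
  define T where "T = snd (snd (f (0, (\<lambda>j. 0), 1)))"
  have counts: "card (osc1_weight_indices q \<mu>' T k) = card (osc1_weight_indices q \<mu> 1 k)" if "k \<noteq> 0" for k
    using osc1_weight_counts_eq[OF f _ that, of 0 "\<lambda>j. 0" 1] by (simp add: osc1_car T_def)
  have neg: "- (x\<^sup>2 * y\<^sup>2) \<noteq> (1::real)" for x y
  proof -
    have "0 \<le> x\<^sup>2 * y\<^sup>2" by simp
    then show ?thesis by linarith
  qed
  \<comment> \<open>the eigenvalue \<open>1\<close> of \<open>ad\<^sup>2\<close> of the generator of \<open>\<real>\<close> occurs once, which forces \<open>T\<^sup>2 = 1\<close>\<close>
  have "osc1_weight_indices q \<mu> 1 1 = {0}" using neg[of 1] by (auto simp: osc1_weight_indices_def)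
  then have "osc1_weight_indices q \<mu>' T 1 \<noteq> {}" using counts[of 1] by auto
  then obtain j where "j \<in> osc1_weight_indices q \<mu>' T 1" by blast
  then have T: "T\<^sup>2 = 1" using neg[of T "\<mu>' j"] by (auto simp: osc1_weight_indices_def)
  have pos: "\<forall>j\<in>{1..q}. (\<mu> j)\<^sup>2 > 0" using \<mu>_nz by simp
  have "card {j\<in>{1..q}. (\<mu>' j)\<^sup>2 = l} = card {j\<in>{1..q}. (\<mu> j)\<^sup>2 = l}" if "l > 0" for l
  proof -
    have "osc1_weight_indices q \<mu>' T (- l) = {j\<in>{1..q}. (\<mu>' j)\<^sup>2 = l}"
      "osc1_weight_indices q \<mu> 1 (- l) = {j\<in>{1..q}. (\<mu> j)\<^sup>2 = l}"
      using that T by (auto simp: osc1_weight_indices_def)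
    then show ?thesis using counts[of "- l"] that by simp
  qed
  from permutes_if_counts_eq_on_pos[OF pos this]
  obtain \<sigma> where \<sigma>: "\<sigma> permutes {1..q}" and sq: "\<forall>j\<in>{1..q}. (\<mu>' j)\<^sup>2 = (\<mu> (\<sigma> j))\<^sup>2"
    by blast
  define \<epsilon> where "\<epsilon> j = (if \<mu>' j = \<mu> (\<sigma> j) then 1 else -1::real)" for j
  have "\<mu>' j = \<epsilon> j * \<mu> (\<sigma> j)" if "j \<in> {1..q}" for j
    using sq that by (auto simp: \<epsilon>_def power2_eq_iff)
  moreover have "\<forall>j. \<epsilon> j \<in> {-1, 1}" by (simp add: \<epsilon>_def)
  ultimately show ?thesis using \<sigma> by blast
qed

lemma conj_perm_osc1_L:
  assumes \<sigma>: "\<sigma> permutes {1..q}" and \<epsilon>: "\<forall>j. \<epsilon> j \<in> {-1, 1}"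
    and \<mu>': "\<forall>j\<in>{1..q}. \<mu>' j = \<epsilon> j * \<mu> (\<sigma> j)"
  shows "conj_perm q \<sigma> \<epsilon> (osc1_L q \<mu> a) = osc1_L q \<mu>' (conj_perm q \<sigma> \<epsilon> a)"
proof
  fix j
  show "conj_perm q \<sigma> \<epsilon> (osc1_L q \<mu> a) j = osc1_L q \<mu>' (conj_perm q \<sigma> \<epsilon> a) j"
  proof (cases "j \<in> {1..q}")
    case True
    then have "\<sigma> j \<in> {1..q}" using permutes_in_image[OF \<sigma>] by simp
    then show ?thesis using True \<mu>' \<epsilon>[rule_format, of j] by (auto simp: conj_perm_def osc1_L_def)
  next
    case False
    then show ?thesis by (auto simp: conj_perm_outside[OF \<sigma>] osc1_L_def)
  qed
qed

lemma conj_perm_osc1_inner: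
  assumes \<sigma>: "\<sigma> permutes {1..q}"
  shows "osc1_inner q (conj_perm q \<sigma> \<epsilon> a) (conj_perm q \<sigma> \<epsilon> b) = osc1_inner q a b"
  by (simp add: osc1_inner_def conj_perm_einner[OF \<sigma>] conj_perm_outside[OF \<sigma>])

definition osc1_iso :: "nat \<Rightarrow> (nat \<Rightarrow> nat) \<Rightarrow> (nat \<Rightarrow> real) \<Rightarrow>
    real \<times> (nat \<Rightarrow> complex) \<times> real \<Rightarrow> real \<times> (nat \<Rightarrow> complex) \<times> real" where
  "osc1_iso q \<sigma> \<epsilon> = (\<lambda>(z, a, t). (z, conj_perm q \<sigma> \<epsilon> a, t))"

lemma osc1_metric_iso:
  assumes \<sigma>: "\<sigma> permutes {1..q}" and \<epsilon>: "\<forall>j. \<epsilon> j \<in> {-1, 1}"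
    and \<mu>': "\<forall>j\<in>{1..q}. \<mu>' j = \<epsilon> j * \<mu> (\<sigma> j)"
  shows "metric_lie_iso (osc1 q \<mu>) (osc1 q \<mu>') (osc1_iso q \<sigma> \<epsilon>)"
proof -
  let ?\<Psi> = "\<lambda>(z, a, t). (z, conj_perm q (inv \<sigma>) (\<epsilon> \<circ> inv \<sigma>) a, t)"
  have "bij_betw (osc1_iso q \<sigma> \<epsilon>) (car (osc1 q \<mu>)) (car (osc1 q \<mu>'))"
    by (rule bij_betw_byWitness[where f' = ?\<Psi>])
      (auto simp: osc1_iso_def osc1_car conj_perm_inverse[OF \<sigma>] conj_perm_outside[OF \<sigma>]
        conj_perm_outside[OF permutes_inv[OF \<sigma>]])
  then show ?thesis
    unfolding metric_lie_iso_def lie_iso_def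
    by (simp add: Ball_def osc1_iso_def osc1_vadd osc1_vscale osc1_brk osc1_frm conj_perm_cadd
        conj_perm_cscale conj_perm_cdiff conj_perm_osc1_L[OF \<sigma> \<epsilon> \<mu>', symmetric]
        conj_perm_osc1_inner[OF \<sigma>])
qed

lemma osc1_lie_isomorphic_iff_metric_isomorphic:
  assumes \<mu>_nz: "\<forall>j\<in>{1..q}. \<mu> j \<noteq> 0"
  shows "lie_isomorphic (osc1 q \<mu>) (osc1 q \<mu>') \<longleftrightarrow> metric_isomorphic (osc1 q \<mu>) (osc1 q \<mu>')"
proof
  assume "lie_isomorphic (osc1 q \<mu>) (osc1 q \<mu>')"
  then obtain f where "lie_iso (osc1 q \<mu>) (osc1 q \<mu>') f" by (auto simp: lie_isomorphic_def)
  then show "metric_isomorphic (osc1 q \<mu>) (osc1 q \<mu>')"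
    unfolding metric_isomorphic_def using osc1_signed_perm[OF _ \<mu>_nz] osc1_metric_iso by blast
qed (auto simp: metric_isomorphic_def lie_isomorphic_def metric_lie_iso_def)

theorem proposition2:
  fixes q :: nat
  shows
  "(\<forall>\<mu> \<mu>' :: nat \<Rightarrow> real.
      (\<forall>j\<in>{1..q}. \<mu> j \<noteq> 0) \<longrightarrow> (\<forall>j\<in>{1..q}. \<mu>' j \<noteq> 0) \<longrightarrow>
      (lie_isomorphic (osc1 q \<mu>) (osc1 q \<mu>') \<longleftrightarrow> metric_isomorphic (osc1 q \<mu>) (osc1 q \<mu>')))
   \<and>
   (\<forall>\<mu> \<mu>' :: nat \<Rightarrow> real \<times> real.
      (\<forall>j\<in>{1..q}. \<mu> j \<noteq> 0) \<longrightarrow> (\<forall>j\<in>{1..q}. \<mu>' j \<noteq> 0) \<longrightarrow>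
      (lie_isomorphic (osc2 q \<mu>) (osc2 q \<mu>') \<longleftrightarrow> metric_isomorphic (osc2 q \<mu>) (osc2 q \<mu>')))
   \<and>
   (\<forall>\<mu> \<mu>' :: nat \<Rightarrow> real \<times> real.
      (\<forall>j\<in>{1..q}. \<mu> j \<noteq> 0) \<longrightarrow> (\<forall>j\<in>{1..q}. \<mu>' j \<noteq> 0) \<longrightarrow>
      (lie_isomorphic (dq q \<mu>) (dq q \<mu>') \<longleftrightarrow>
       equiv_signed_perm q (mu_image q \<mu>) (mu_image q \<mu>')))"
  using osc1_lie_isomorphic_iff_metric_isomorphic osc2_lie_isomorphic_iff_metric_isomorphic
    dq_lie_isomorphic_iff by blast

end
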